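(* Let $\mathbb{X}$ be a basic reverse differential restriction category. For any map $g:A\times B\to C$ define $$g^{\dagger[A]}:=(\iota_0\times 1_C)\,R[g]\,\pi_1:A\times C\to B,$$ where $\iota_0=\langle 1_A,0\rangle:A\to A\times B$. For $f:A\to B$ define $D[f]:=R[f]^{\dagger[A]}=(\iota_0\times 1_A)R[R[f]]\pi_1:A\times A\to B$. Then $\mathbb{X}$ satisfies axiom [RD.6] if and only if $D[f]^{\dagger[A]}=R[f]$ for every map $f$, i.e. $$(\iota_0\times 1_B)\,R[D[f]]\,\pi_1=R[f]\quad\text{for all } f:A\to B,$$ where here $\iota_0=\langle 1_A,0\rangle:A\to A\times A$.
   Context: Composition is written in diagrammatic order: $fg$ means "first $f$, then $g$". A restriction category is a category with an operation sending each $f:A\to B$ to a map $\bar f:A\to A$ such that $\bar f f=f$, $\bar f\bar g=\bar g\bar f$ (for $f,g$ with common domain), $\overline{\bar f g}=\bar f\bar g$, and $f\bar g=\overline{fg}\,f$. A map $f$ is total if $\bar f=1$. The category has restriction products if: - there is an object $1$ with a total map $!_A:A\to 1$ for each $A$ such that every $f:A\to1$ equals $\bar f\,!_A$; - for all $A,B$ there is an object $A\times B$ with total maps $\pi_0,\pi_1$ such that for all $f:C\to A$, $g:C\to B$ there is a unique $\langle f,g\rangle$ with $\langle f,g\rangle\pi_0=\bar g f$ and $\langle f,g\rangle\pi_1=\bar f g$. Write $f\times g=\langle\pi_0f,\pi_1g\rangle$. A Cartesian left additive restriction category is a restriction category with restriction products in which every hom-set is a commutative monoid $(+,0)$ such that: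 - $\overline{f+g}=\bar f\bar g$ and $\bar 0=1$; - $x(f+g)=xf+xg$ and $x0=\bar x 0$; - $(f+g)\pi_i=f\pi_i+g\pi_i$ and $0\pi_i=0$. Write $\iota_0=\langle 1,0\rangle$ and $\iota_1=\langle 0,1\rangle$. A basic reverse differential restriction category is a Cartesian left additive restriction category with an operation sending each $f:A\to B$ to $R[f]:A\times B\to A$ satisfying: - [RD.1] $R[f+g]=R[f]+R[g]$ and $R[0]=0$. - [RD.2] $\langle a,b+c\rangle R[f]=\langle a,b\rangle R[f]+\langle a,c\rangle R[f]$ and $\langle a,0\rangle R[f]=\overline{af}\,0$. - [RD.3] $R[\pi_j]=\pi_1\iota_j$. - [RD.4] $R[\langle f,g\rangle]=(1\times\pi_0)R[f]+(1\times\pi_1)R[g]$. - [RD.5] $R[fg]=\langle\pi_0,\langle\pi_0f,\pi_1\rangle R[g]\rangle R[f]$. - [RD.8] $\overline{R[f]}=\bar f\times 1$. - [RD.9] $R[\bar f]=(\bar f\times1)\pi_1$. Axiom [RD.6] is: for all $f:A\to B$, $$\langle 1_A\times\pi_0,\,0\times\pi_1\rangle(\iota_0\times 1)R[R[R[f]]]\pi_1=(1_A\times\pi_1)R[f]$$ as maps $A\times(B\times B)\to A$, where $0:A\to A$. *)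

theory Defs
  imports Main
begin

text \<open>Composition is diagrammatic: c_cmp C f g means "first f, then g".
Objects are all elements of type 'o; arrows are the elements m of type 'm with
c_arr C m.\<close>

record ('o, 'm) rdcat =
  c_arr  :: "'m \<Rightarrow> bool"
  c_dom  :: "'m \<Rightarrow> 'o"
  c_cod  :: "'m \<Rightarrow> 'o"
  c_cmp  :: "'m \<Rightarrow> 'm \<Rightarrow> 'm"
  c_idt  :: "'o \<Rightarrow> 'm"
  c_rst  :: "'m \<Rightarrow> 'm"
  c_trm  :: "'o"
  c_bang :: "'o \<Rightarrow> 'm"
  c_prd  :: "'o \<Rightarrow> 'o \<Rightarrow> 'o"
  c_pi0  :: "'o \<Rightarrow> 'o \<Rightarrow> 'm"
  c_pi1  :: "'o \<Rightarrow> 'o \<Rightarrow> 'm"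
  c_pair :: "'m \<Rightarrow> 'm \<Rightarrow> 'm"
  c_add  :: "'m \<Rightarrow> 'm \<Rightarrow> 'm"
  c_zer  :: "'o \<Rightarrow> 'o \<Rightarrow> 'm"
  c_rev  :: "'m \<Rightarrow> 'm"

definition hom :: "('o, 'm, 'x) rdcat_scheme \<Rightarrow> 'o \<Rightarrow> 'o \<Rightarrow> 'm \<Rightarrow> bool" where
  "hom C A B f \<longleftrightarrow> c_arr C f \<and> c_dom C f = A \<and> c_cod C f = B"

definition par :: "('o, 'm, 'x) rdcat_scheme \<Rightarrow> 'm \<Rightarrow> 'm \<Rightarrow> bool" where
  "par C f g \<longleftrightarrow> c_arr C f \<and> c_arr C g \<and> c_dom C f = c_dom C g \<and> c_cod C f = c_cod C g"

definition is_category :: "('o, 'm, 'x) rdcat_scheme \<Rightarrow> bool" where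
  "is_category C \<longleftrightarrow>
     (\<forall>A. hom C A A (c_idt C A)) \<and>
     (\<forall>f g. c_arr C f \<and> c_arr C g \<and> c_cod C f = c_dom C g \<longrightarrow>
        hom C (c_dom C f) (c_cod C g) (c_cmp C f g)) \<and>
     (\<forall>f. c_arr C f \<longrightarrow> c_cmp C (c_idt C (c_dom C f)) f = f \<and> c_cmp C f (c_idt C (c_cod C f)) = f) \<and>
     (\<forall>f g h. c_arr C f \<and> c_arr C g \<and> c_arr C h \<and> c_cod C f = c_dom C g \<and> c_cod C g = c_dom C h \<longrightarrow>
        c_cmp C (c_cmp C f g) h = c_cmp C f (c_cmp C g h))"

definition is_restriction :: "('o, 'm, 'x) rdcat_scheme \<Rightarrow> bool" where
  "is_restriction C \<longleftrightarrow>
     (\<forall>f. c_arr C f \<longrightarrow> hom C (c_dom C f) (c_dom C f) (c_rst C f)) \<and>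
     (\<forall>f. c_arr C f \<longrightarrow> c_cmp C (c_rst C f) f = f) \<and>
     (\<forall>f g. c_arr C f \<and> c_arr C g \<and> c_dom C f = c_dom C g \<longrightarrow>
        c_cmp C (c_rst C f) (c_rst C g) = c_cmp C (c_rst C g) (c_rst C f)) \<and>
     (\<forall>f g. c_arr C f \<and> c_arr C g \<and> c_dom C f = c_dom C g \<longrightarrow>
        c_rst C (c_cmp C (c_rst C f) g) = c_cmp C (c_rst C f) (c_rst C g)) \<and>
     (\<forall>f g. c_arr C f \<and> c_arr C g \<and> c_cod C f = c_dom C g \<longrightarrow>
        c_cmp C f (c_rst C g) = c_cmp C (c_rst C (c_cmp C f g)) f)"

definition total :: "('o, 'm, 'x) rdcat_scheme \<Rightarrow> 'm \<Rightarrow> bool" where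
  "total C f \<longleftrightarrow> c_rst C f = c_idt C (c_dom C f)"

definition has_restriction_products :: "('o, 'm, 'x) rdcat_scheme \<Rightarrow> bool" where
  "has_restriction_products C \<longleftrightarrow>
     (\<forall>A. hom C A (c_trm C) (c_bang C A) \<and> total C (c_bang C A)) \<and>
     (\<forall>A f. hom C A (c_trm C) f \<longrightarrow> f = c_cmp C (c_rst C f) (c_bang C A)) \<and>
     (\<forall>A B. hom C (c_prd C A B) A (c_pi0 C A B) \<and> total C (c_pi0 C A B) \<and>
            hom C (c_prd C A B) B (c_pi1 C A B) \<and> total C (c_pi1 C A B)) \<and>
     (\<forall>f g. c_arr C f \<and> c_arr C g \<and> c_dom C f = c_dom C g \<longrightarrow>
        (let X = c_dom C f; A = c_cod C f; B = c_cod C g in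
          hom C X (c_prd C A B) (c_pair C f g) \<and>
          c_cmp C (c_pair C f g) (c_pi0 C A B) = c_cmp C (c_rst C g) f \<and>
          c_cmp C (c_pair C f g) (c_pi1 C A B) = c_cmp C (c_rst C f) g \<and>
          (\<forall>h. hom C X (c_prd C A B) h \<and>
               c_cmp C h (c_pi0 C A B) = c_cmp C (c_rst C g) f \<and>
               c_cmp C h (c_pi1 C A B) = c_cmp C (c_rst C f) g \<longrightarrow> h = c_pair C f g)))"

definition tensor :: "('o, 'm, 'x) rdcat_scheme \<Rightarrow> 'm \<Rightarrow> 'm \<Rightarrow> 'm" where
  "tensor C f g = c_pair C (c_cmp C (c_pi0 C (c_dom C f) (c_dom C g)) f)
                           (c_cmp C (c_pi1 C (c_dom C f) (c_dom C g)) g)"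

definition iota0 :: "('o, 'm, 'x) rdcat_scheme \<Rightarrow> 'o \<Rightarrow> 'o \<Rightarrow> 'm" where
  "iota0 C A B = c_pair C (c_idt C A) (c_zer C A B)"

definition iota1 :: "('o, 'm, 'x) rdcat_scheme \<Rightarrow> 'o \<Rightarrow> 'o \<Rightarrow> 'm" where
  "iota1 C A B = c_pair C (c_zer C B A) (c_idt C B)"

definition is_CLARC :: "('o, 'm, 'x) rdcat_scheme \<Rightarrow> bool" where
  "is_CLARC C \<longleftrightarrow>
     is_category C \<and> is_restriction C \<and> has_restriction_products C \<and>
     (\<forall>A B. hom C A B (c_zer C A B)) \<and>
     (\<forall>f g. par C f g \<longrightarrow> hom C (c_dom C f) (c_cod C f) (c_add C f g)) \<and>
     (\<forall>f g h. par C f g \<and> par C g h \<longrightarrow> c_add C (c_add C f g) h = c_add C f (c_add C g h)) \<and>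
     (\<forall>f g. par C f g \<longrightarrow> c_add C f g = c_add C g f) \<and>
     (\<forall>f. c_arr C f \<longrightarrow> c_add C f (c_zer C (c_dom C f) (c_cod C f)) = f) \<and>
     (\<forall>f g. par C f g \<longrightarrow> c_rst C (c_add C f g) = c_cmp C (c_rst C f) (c_rst C g)) \<and>
     (\<forall>A B. c_rst C (c_zer C A B) = c_idt C A) \<and>
     (\<forall>x f g. c_arr C x \<and> par C f g \<and> c_cod C x = c_dom C f \<longrightarrow>
        c_cmp C x (c_add C f g) = c_add C (c_cmp C x f) (c_cmp C x g)) \<and>
     (\<forall>x B. c_arr C x \<longrightarrow>
        c_cmp C x (c_zer C (c_cod C x) B) = c_cmp C (c_rst C x) (c_zer C (c_dom C x) B)) \<and>
     (\<forall>f g A B. par C f g \<and> c_cod C f = c_prd C A B \<longrightarrow>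
        c_cmp C (c_add C f g) (c_pi0 C A B) = c_add C (c_cmp C f (c_pi0 C A B)) (c_cmp C g (c_pi0 C A B)) \<and>
        c_cmp C (c_add C f g) (c_pi1 C A B) = c_add C (c_cmp C f (c_pi1 C A B)) (c_cmp C g (c_pi1 C A B))) \<and>
     (\<forall>X A B. c_cmp C (c_zer C X (c_prd C A B)) (c_pi0 C A B) = c_zer C X A \<and>
              c_cmp C (c_zer C X (c_prd C A B)) (c_pi1 C A B) = c_zer C X B)"

definition is_basic_rdrc :: "('o, 'm, 'x) rdcat_scheme \<Rightarrow> bool" where
  "is_basic_rdrc C \<longleftrightarrow>
     is_CLARC C \<and>
     (\<forall>f. c_arr C f \<longrightarrow> hom C (c_prd C (c_dom C f) (c_cod C f)) (c_dom C f) (c_rev C f)) \<and>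
     \<comment> \<open>RD.1\<close>
     (\<forall>f g. par C f g \<longrightarrow> c_rev C (c_add C f g) = c_add C (c_rev C f) (c_rev C g)) \<and>
     (\<forall>A B. c_rev C (c_zer C A B) = c_zer C (c_prd C A B) A) \<and>
     \<comment> \<open>RD.2\<close>
     (\<forall>a b c f. c_arr C a \<and> c_arr C f \<and> c_cod C a = c_dom C f \<and> par C b c \<and>
        c_dom C b = c_dom C a \<and> c_cod C b = c_cod C f \<longrightarrow>
        c_cmp C (c_pair C a (c_add C b c)) (c_rev C f)
          = c_add C (c_cmp C (c_pair C a b) (c_rev C f)) (c_cmp C (c_pair C a c) (c_rev C f))) \<and>
     (\<forall>a f. c_arr C a \<and> c_arr C f \<and> c_cod C a = c_dom C f \<longrightarrow>
        c_cmp C (c_pair C a (c_zer C (c_dom C a) (c_cod C f))) (c_rev C f)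
          = c_cmp C (c_rst C (c_cmp C a f)) (c_zer C (c_dom C a) (c_dom C f))) \<and>
     \<comment> \<open>RD.3\<close>
     (\<forall>A B. c_rev C (c_pi0 C A B) = c_cmp C (c_pi1 C (c_prd C A B) A) (iota0 C A B) \<and>
            c_rev C (c_pi1 C A B) = c_cmp C (c_pi1 C (c_prd C A B) B) (iota1 C A B)) \<and>
     \<comment> \<open>RD.4\<close>
     (\<forall>f g. c_arr C f \<and> c_arr C g \<and> c_dom C f = c_dom C g \<longrightarrow>
        c_rev C (c_pair C f g)
          = c_add C (c_cmp C (tensor C (c_idt C (c_dom C f)) (c_pi0 C (c_cod C f) (c_cod C g))) (c_rev C f))
                    (c_cmp C (tensor C (c_idt C (c_dom C f)) (c_pi1 C (c_cod C f) (c_cod C g))) (c_rev C g))) \<and>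
     \<comment> \<open>RD.5\<close>
     (\<forall>f g. c_arr C f \<and> c_arr C g \<and> c_cod C f = c_dom C g \<longrightarrow>
        c_rev C (c_cmp C f g)
          = c_cmp C (c_pair C (c_pi0 C (c_dom C f) (c_cod C g))
                        (c_cmp C (c_pair C (c_cmp C (c_pi0 C (c_dom C f) (c_cod C g)) f)
                                           (c_pi1 C (c_dom C f) (c_cod C g)))
                                 (c_rev C g)))
                    (c_rev C f)) \<and>
     \<comment> \<open>RD.8\<close>
     (\<forall>f. c_arr C f \<longrightarrow> c_rst C (c_rev C f) = tensor C (c_rst C f) (c_idt C (c_cod C f))) \<and>
     \<comment> \<open>RD.9\<close>
     (\<forall>f. c_arr C f \<longrightarrow>
        c_rev C (c_rst C f) = c_cmp C (tensor C (c_rst C f) (c_idt C (c_dom C f))) (c_pi1 C (c_dom C f) (c_dom C f)))"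

definition RD6 :: "('o, 'm, 'x) rdcat_scheme \<Rightarrow> 'm \<Rightarrow> bool" where
  "RD6 C f \<longleftrightarrow>
     (let A = c_dom C f; B = c_cod C f in
       c_cmp C (c_cmp C (c_cmp C
           (c_pair C (tensor C (c_idt C A) (c_pi0 C B B)) (tensor C (c_zer C A A) (c_pi1 C B B)))
           (tensor C (iota0 C (c_prd C A B) A) (c_idt C (c_prd C A B))))
           (c_rev C (c_rev C (c_rev C f))))
         (c_pi1 C (c_prd C A B) A)
       = c_cmp C (tensor C (c_idt C A) (c_pi1 C B B)) (c_rev C f))"

definition dagger :: "('o, 'm, 'x) rdcat_scheme \<Rightarrow> 'o \<Rightarrow> 'o \<Rightarrow> 'm \<Rightarrow> 'm" where
  "dagger C A B g = c_cmp C (c_cmp C (tensor C (iota0 C A B) (c_idt C (c_cod C g))) (c_rev C g)) (c_pi1 C A B)"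

definition Dop :: "('o, 'm, 'x) rdcat_scheme \<Rightarrow> 'm \<Rightarrow> 'm" where
  "Dop C f = dagger C (c_dom C f) (c_cod C f) (c_rev C f)"

end

theory Submission
  imports Defs
begin

(*
  For a map g, the composite <p, v> D[g] is the derivative of g at the point p in the direction v.
  From [RD.1]-[RD.5] one obtains, up to the restriction bookkeeping expressed by rst_le, the rules
  of a differential: D is additive, preserves pairing, vanishes in the direction 0, is the identity
  on projections and satisfies the chain rule <p, v> D[u g] = <p u, <p, v> D[u]> D[g].

  Unfolding the definitions, the left-hand side of [RD.6] is D[R f] at the point (a, b) in the
  direction (0, c), whereas (1 x pi1) D[f]^dagger is D[R f] at the point (a, 0) in the direction
  (0, c). Since R[f] is additive in its second argument [RD.2], its derivative in a direction of
  the form (0, c) does not depend on b, so [RD.6] for f says exactly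
  (1 x pi1) D[f]^dagger = (1 x pi1) R[f]. As 1 x pi1 has the section <pi0, <0, pi1>>, this is
  equivalent to D[f]^dagger = R[f].
*)

locale basic_rdrc =
  fixes C :: "('o, 'm, 'x) rdcat_scheme"
  assumes basic_rdrc: "is_basic_rdrc C"
begin

abbreviation arr where "arr \<equiv> c_arr C"
abbreviation dom where "dom \<equiv> c_dom C"
abbreviation cod where "cod \<equiv> c_cod C"
abbreviation cmp (infixr "\<cdot>" 70) where "f \<cdot> g \<equiv> c_cmp C f g"
abbreviation Id where "Id \<equiv> c_idt C"
abbreviation rst where "rst \<equiv> c_rst C"
abbreviation Pr where "Pr \<equiv> c_prd C"
abbreviation p0 where "p0 \<equiv> c_pi0 C"
abbreviation p1 where "p1 \<equiv> c_pi1 C"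
abbreviation pair where "pair \<equiv> c_pair C"
abbreviation oplus (infixl "\<oplus>" 65) where "f \<oplus> g \<equiv> c_add C f g"
abbreviation zer where "zer \<equiv> c_zer C"
abbreviation R where "R \<equiv> c_rev C"
abbreviation cross where "cross \<equiv> tensor C"

lemma left_additive: "is_CLARC C"
  using basic_rdrc unfolding is_basic_rdrc_def by blast

lemma category: "is_category C"
  and restriction: "is_restriction C"
  and restriction_products: "has_restriction_products C"
  using left_additive unfolding is_CLARC_def by blast+

named_theorems typing

lemma arr_Id[typing]: "arr (Id A)" and dom_Id[typing]: "dom (Id A) = A" and cod_Id[typing]: "cod (Id A) = A"
  using category unfolding is_category_def hom_def by blast+

lemma arr_comp[typing]: "arr f \<Longrightarrow> arr g \<Longrightarrow> cod f = dom g \<Longrightarrow> arr (f \<cdot> g)"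
  and dom_comp[typing]: "arr f \<Longrightarrow> arr g \<Longrightarrow> cod f = dom g \<Longrightarrow> dom (f \<cdot> g) = dom f"
  and cod_comp[typing]: "arr f \<Longrightarrow> arr g \<Longrightarrow> cod f = dom g \<Longrightarrow> cod (f \<cdot> g) = cod g"
  using category unfolding is_category_def hom_def by blast+

lemma Id_comp: "arr f \<Longrightarrow> dom f = A \<Longrightarrow> Id A \<cdot> f = f"
  and comp_Id: "arr f \<Longrightarrow> cod f = A \<Longrightarrow> f \<cdot> Id A = f"
  using category unfolding is_category_def by blast+

lemma comp_assoc: "arr f \<Longrightarrow> arr g \<Longrightarrow> arr h \<Longrightarrow> cod f = dom g \<Longrightarrow> cod g = dom h \<Longrightarrow>
   (f \<cdot> g) \<cdot> h = f \<cdot> g \<cdot> h"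
  using category unfolding is_category_def by blast

lemma arr_rst[typing]: "arr f \<Longrightarrow> arr (rst f)" and dom_rst[typing]: "arr f \<Longrightarrow> dom (rst f) = dom f"
  and cod_rst[typing]: "arr f \<Longrightarrow> cod (rst f) = dom f"
  using restriction unfolding is_restriction_def hom_def by blast+

lemma rst_comp_self: "arr f \<Longrightarrow> rst f \<cdot> f = f"
  and rst_commute: "arr f \<Longrightarrow> arr g \<Longrightarrow> dom f = dom g \<Longrightarrow> rst f \<cdot> rst g = rst g \<cdot> rst f"
  and rst_rst_comp: "arr f \<Longrightarrow> arr g \<Longrightarrow> dom f = dom g \<Longrightarrow> rst (rst f \<cdot> g) = rst f \<cdot> rst g"
  and comp_rst: "arr f \<Longrightarrow> arr g \<Longrightarrow> cod f = dom g \<Longrightarrow> f \<cdot> rst g = rst (f \<cdot> g) \<cdot> f"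
  using restriction unfolding is_restriction_def by blast+

lemma p0_typing[typing]: "arr (p0 A B)" "dom (p0 A B) = Pr A B" "cod (p0 A B) = A"
  and p1_typing[typing]: "arr (p1 A B)" "dom (p1 A B) = Pr A B" "cod (p1 A B) = B"
  and rst_p0: "rst (p0 A B) = Id (Pr A B)" and rst_p1: "rst (p1 A B) = Id (Pr A B)"
  using restriction_products unfolding has_restriction_products_def hom_def total_def by simp_all

lemma pair_axiom: "arr f \<Longrightarrow> arr g \<Longrightarrow> dom f = dom g \<Longrightarrow>
          hom C (dom f) (Pr (cod f) (cod g)) (pair f g) \<and>
          pair f g \<cdot> p0 (cod f) (cod g) = rst g \<cdot> f \<and>
          pair f g \<cdot> p1 (cod f) (cod g) = rst f \<cdot> g \<and>
          (\<forall>h. hom C (dom f) (Pr (cod f) (cod g)) h \<and>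
               h \<cdot> p0 (cod f) (cod g) = rst g \<cdot> f \<and>
               h \<cdot> p1 (cod f) (cod g) = rst f \<cdot> g \<longrightarrow> h = pair f g)"
  using restriction_products unfolding has_restriction_products_def Let_def by blast

lemma arr_pair[typing]: "arr f \<Longrightarrow> arr g \<Longrightarrow> dom f = dom g \<Longrightarrow> arr (pair f g)"
  and dom_pair[typing]: "arr f \<Longrightarrow> arr g \<Longrightarrow> dom f = dom g \<Longrightarrow> dom (pair f g) = dom f"
  and cod_pair[typing]: "arr f \<Longrightarrow> arr g \<Longrightarrow> dom f = dom g \<Longrightarrow> cod (pair f g) = Pr (cod f) (cod g)"
  using pair_axiom unfolding hom_def by simp_all

lemma pair_comp_p0: "arr f \<Longrightarrow> arr g \<Longrightarrow> dom f = dom g \<Longrightarrow> cod f = A \<Longrightarrow> cod g = B \<Longrightarrow>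
   pair f g \<cdot> p0 A B = rst g \<cdot> f"
  and pair_comp_p1: "arr f \<Longrightarrow> arr g \<Longrightarrow> dom f = dom g \<Longrightarrow> cod f = A \<Longrightarrow> cod g = B \<Longrightarrow>
   pair f g \<cdot> p1 A B = rst f \<cdot> g"
  using pair_axiom by blast+

lemma pair_unique: "arr f \<Longrightarrow> arr g \<Longrightarrow> dom f = dom g \<Longrightarrow> cod f = A \<Longrightarrow> cod g = B \<Longrightarrow>
   arr h \<Longrightarrow> dom h = dom f \<Longrightarrow> cod h = Pr A B \<Longrightarrow>
   h \<cdot> p0 A B = rst g \<cdot> f \<Longrightarrow> h \<cdot> p1 A B = rst f \<cdot> g \<Longrightarrow> h = pair f g"
  using pair_axiom unfolding hom_def by blast

lemma cross_unfold: "cross f g = pair (p0 (dom f) (dom g) \<cdot> f) (p1 (dom f) (dom g) \<cdot> g)"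
  by (simp add: tensor_def)

lemma arr_cross[typing]: "arr f \<Longrightarrow> arr g \<Longrightarrow> arr (cross f g)"
  and dom_cross[typing]: "arr f \<Longrightarrow> arr g \<Longrightarrow> dom (cross f g) = Pr (dom f) (dom g)"
  and cod_cross[typing]: "arr f \<Longrightarrow> arr g \<Longrightarrow> cod (cross f g) = Pr (cod f) (cod g)"
  unfolding cross_unfold by (simp_all add: typing)

lemma zer_hom: "hom C A B (zer A B)"
  using left_additive unfolding is_CLARC_def by (elim conjE) metis

lemma zer_typing[typing]: "arr (zer A B)" "dom (zer A B) = A" "cod (zer A B) = B"
  using zer_hom unfolding hom_def by simp_all

lemma oplus_hom: "par C f g \<Longrightarrow> hom C (dom f) (cod f) (f \<oplus> g)"
  using left_additive unfolding is_CLARC_def by (elim conjE) metis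

lemma arr_oplus[typing]: "arr f \<Longrightarrow> arr g \<Longrightarrow> dom f = dom g \<Longrightarrow> cod f = cod g \<Longrightarrow> arr (f \<oplus> g)"
  and dom_oplus[typing]: "arr f \<Longrightarrow> arr g \<Longrightarrow> dom f = dom g \<Longrightarrow> cod f = cod g \<Longrightarrow> dom (f \<oplus> g) = dom f"
  and cod_oplus[typing]: "arr f \<Longrightarrow> arr g \<Longrightarrow> dom f = dom g \<Longrightarrow> cod f = cod g \<Longrightarrow> cod (f \<oplus> g) = cod f"
  using oplus_hom unfolding hom_def par_def by simp_all

lemma iota0_typing[typing]: "arr (iota0 C A B)" "dom (iota0 C A B) = A" "cod (iota0 C A B) = Pr A B"
  unfolding iota0_def by (simp_all add: typing)

lemma iota1_typing[typing]: "arr (iota1 C A B)" "dom (iota1 C A B) = B" "cod (iota1 C A B) = Pr A B"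
  unfolding iota1_def by (simp_all add: typing)

lemma R_hom: "arr f \<Longrightarrow> hom C (Pr (dom f) (cod f)) (dom f) (R f)"
  using basic_rdrc unfolding is_basic_rdrc_def by (elim conjE) metis

lemma arr_R[typing]: "arr f \<Longrightarrow> arr (R f)" and dom_R[typing]: "arr f \<Longrightarrow> dom (R f) = Pr (dom f) (cod f)"
  and cod_R[typing]: "arr f \<Longrightarrow> cod (R f) = dom f"
  using R_hom unfolding hom_def by simp_all

lemma oplus_commute: "arr f \<Longrightarrow> arr g \<Longrightarrow> dom f = dom g \<Longrightarrow> cod f = cod g \<Longrightarrow> f \<oplus> g = g \<oplus> f"
  using left_additive unfolding is_CLARC_def par_def by (elim conjE) metis

lemma oplus_zer: "arr f \<Longrightarrow> dom f = A \<Longrightarrow> cod f = B \<Longrightarrow> f \<oplus> zer A B = f"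
  using left_additive unfolding is_CLARC_def par_def by (elim conjE) metis

lemma rst_oplus: "arr f \<Longrightarrow> arr g \<Longrightarrow> dom f = dom g \<Longrightarrow>
    cod f = cod g \<Longrightarrow> rst (f \<oplus> g) = rst f \<cdot> rst g"
  using left_additive unfolding is_CLARC_def par_def by (elim conjE) metis

lemma rst_zer: "rst (zer A B) = Id A"
  using left_additive unfolding is_CLARC_def par_def by (elim conjE) metis

lemma comp_oplus: "arr x \<Longrightarrow> arr f \<Longrightarrow> arr g \<Longrightarrow> dom f = dom g \<Longrightarrow>
    cod f = cod g \<Longrightarrow> cod x = dom f \<Longrightarrow>
    x \<cdot> (f \<oplus> g) = x \<cdot> f \<oplus> x \<cdot> g"
  using left_additive unfolding is_CLARC_def par_def by (elim conjE) metis

lemma comp_zer: "arr x \<Longrightarrow> cod x = A \<Longrightarrow> x \<cdot> zer A B = rst x \<cdot> zer (dom x) B"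
  using left_additive unfolding is_CLARC_def par_def by (elim conjE) metis

lemma oplus_comp_p0: "arr f \<Longrightarrow> arr g \<Longrightarrow> dom f = dom g \<Longrightarrow> cod f = Pr A B \<Longrightarrow> cod g = Pr A B \<Longrightarrow>
    (f \<oplus> g) \<cdot> p0 A B = f \<cdot> p0 A B \<oplus> g \<cdot> p0 A B"
  using left_additive unfolding is_CLARC_def par_def by (elim conjE) metis

lemma oplus_comp_p1: "arr f \<Longrightarrow> arr g \<Longrightarrow> dom f = dom g \<Longrightarrow> cod f = Pr A B \<Longrightarrow> cod g = Pr A B \<Longrightarrow>
    (f \<oplus> g) \<cdot> p1 A B = f \<cdot> p1 A B \<oplus> g \<cdot> p1 A B"
  using left_additive unfolding is_CLARC_def par_def by (elim conjE) metis

lemma zer_comp_p0: "zer X (Pr A B) \<cdot> p0 A B = zer X A"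
  using left_additive unfolding is_CLARC_def par_def by (elim conjE) metis

lemma zer_comp_p1: "zer X (Pr A B) \<cdot> p1 A B = zer X B"
  using left_additive unfolding is_CLARC_def par_def by (elim conjE) metis

lemma RD1_add: "arr f \<Longrightarrow> arr g \<Longrightarrow> dom f = dom g \<Longrightarrow> cod f = cod g \<Longrightarrow> R (f \<oplus> g) = R f \<oplus> R g"
  using basic_rdrc unfolding is_basic_rdrc_def par_def by (elim conjE) metis

lemma RD1_zero: "R (zer A B) = zer (Pr A B) A"
  using basic_rdrc unfolding is_basic_rdrc_def par_def by (elim conjE) metis

lemma RD2_add: "arr a \<Longrightarrow> arr f \<Longrightarrow> cod a = dom f \<Longrightarrow> arr b \<Longrightarrow>
    arr c \<Longrightarrow> dom b = dom a \<Longrightarrow> dom c = dom a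
   \<Longrightarrow> cod b = cod f \<Longrightarrow> cod c = cod f \<Longrightarrow>
   pair a (b \<oplus> c) \<cdot> R f = pair a b \<cdot> R f \<oplus> pair a c \<cdot> R f"
  using basic_rdrc unfolding is_basic_rdrc_def par_def by (elim conjE) metis

lemma RD2_zero: "arr a \<Longrightarrow> arr f \<Longrightarrow> cod a = dom f \<Longrightarrow>
   pair a (zer (dom a) (cod f)) \<cdot> R f = rst (a \<cdot> f) \<cdot> zer (dom a) (dom f)"
  using basic_rdrc unfolding is_basic_rdrc_def par_def by (elim conjE) metis

lemma RD3_p0: "R (p0 A B) = p1 (Pr A B) A \<cdot> iota0 C A B"
  using basic_rdrc unfolding is_basic_rdrc_def par_def by (elim conjE) metis

lemma RD3_p1: "R (p1 A B) = p1 (Pr A B) B \<cdot> iota1 C A B"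
  using basic_rdrc unfolding is_basic_rdrc_def par_def by (elim conjE) metis

lemma RD4: "arr f \<Longrightarrow> arr g \<Longrightarrow> dom f = dom g \<Longrightarrow> R (pair f g) =
   cross (Id (dom f)) (p0 (cod f) (cod g)) \<cdot> R f \<oplus> cross (Id (dom f)) (p1 (cod f) (cod g)) \<cdot> R g"
  using basic_rdrc unfolding is_basic_rdrc_def par_def by (elim conjE) metis

lemma RD5: "arr f \<Longrightarrow> arr g \<Longrightarrow> cod f = dom g \<Longrightarrow> R (f \<cdot> g) =
   pair (p0 (dom f) (cod g)) (pair (p0 (dom f) (cod g) \<cdot> f) (p1 (dom f) (cod g)) \<cdot> R g) \<cdot> R f"
  using basic_rdrc unfolding is_basic_rdrc_def par_def by (elim conjE) metis

lemma RD8: "arr f \<Longrightarrow> rst (R f) = cross (rst f) (Id (cod f))"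
  using basic_rdrc unfolding is_basic_rdrc_def par_def by (elim conjE) metis

lemma RD9: "arr f \<Longrightarrow> R (rst f) = cross (rst f) (Id (dom f)) \<cdot> p1 (dom f) (dom f)"
  using basic_rdrc unfolding is_basic_rdrc_def par_def by (elim conjE) metis

section \<open>Restriction calculus\<close>

lemma rst_Id: "rst (Id A) = Id A"
  using rst_comp_self[of "Id A"] comp_Id[of "rst (Id A)" A] by (simp add: typing)

lemma rst_rst: "arr f \<Longrightarrow> rst (rst f) = rst f"
proof -
  assume f: "arr f"
  have "rst (rst f \<cdot> Id (dom f)) = rst f \<cdot> rst (Id (dom f))" using f by (simp add: rst_rst_comp typing)
  then show ?thesis using f by (simp add: rst_Id comp_Id typing)
qed

lemma rst_idem: "arr f \<Longrightarrow> rst f \<cdot> rst f = rst f"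
  using rst_rst_comp[of f f] rst_comp_self[of f] by simp

lemma rst_rst_comp_left: "arr f \<Longrightarrow> arr g \<Longrightarrow> cod f = dom g \<Longrightarrow> rst f \<cdot> rst (f \<cdot> g) = rst (f \<cdot> g)"
proof -
  assume a: "arr f" "arr g" "cod f = dom g"
  have "rst (rst f \<cdot> (f \<cdot> g)) = rst f \<cdot> rst (f \<cdot> g)" using a by (simp add: rst_rst_comp typing)
  moreover have "rst f \<cdot> (f \<cdot> g) = f \<cdot> g" using a by (simp add: comp_assoc[symmetric] rst_comp_self typing)
  ultimately show ?thesis by simp
qed

lemma rst_rst_comp_right: "arr f \<Longrightarrow> arr g \<Longrightarrow> cod f = dom g \<Longrightarrow> rst (f \<cdot> g) \<cdot> rst f = rst (f \<cdot> g)"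
  using rst_rst_comp_left[of f g] rst_commute[of f "f \<cdot> g"] by (simp add: typing)

lemma rst_comp_total: "arr f \<Longrightarrow> arr g \<Longrightarrow> cod f = dom g \<Longrightarrow> rst g = Id (dom g) \<Longrightarrow> rst (f \<cdot> g) = rst f"
proof -
  assume a: "arr f" "arr g" "cod f = dom g" "rst g = Id (dom g)"
  have "f = rst (f \<cdot> g) \<cdot> f" using a comp_rst[of f g] comp_Id[of f "dom g"] by simp
  hence "rst f = rst (rst (f \<cdot> g) \<cdot> f)" by simp
  also have "\<dots> = rst (f \<cdot> g) \<cdot> rst f" using a by (simp add: rst_rst_comp typing)
  also have "\<dots> = rst (f \<cdot> g)" using a by (simp add: rst_rst_comp_right)
  finally show ?thesis by simp
qed

lemma rst_comp_rst: "arr f \<Longrightarrow> arr g \<Longrightarrow> cod f = dom g \<Longrightarrow> rst (f \<cdot> rst g) = rst (f \<cdot> g)"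
proof -
  assume a: "arr f" "arr g" "cod f = dom g"
  have "rst (f \<cdot> rst g) = rst (rst (f \<cdot> g) \<cdot> f)" using a by (simp add: comp_rst)
  also have "\<dots> = rst (f \<cdot> g) \<cdot> rst f" using a by (simp add: rst_rst_comp typing)
  also have "\<dots> = rst (f \<cdot> g)" using a by (simp add: rst_rst_comp_right)
  finally show ?thesis .
qed

lemma rst_absorb: "arr x \<Longrightarrow> arr y \<Longrightarrow> dom x = dom y \<Longrightarrow> rst y \<cdot> rst x = rst y \<Longrightarrow> rst x \<cdot> y = y"
proof -
  assume a: "arr x" "arr y" "dom x = dom y" "rst y \<cdot> rst x = rst y"
  have "rst x \<cdot> y = rst x \<cdot> (rst y \<cdot> y)" using a by (simp add: rst_comp_self)
  also have "\<dots> = (rst x \<cdot> rst y) \<cdot> y" using a by (simp add: comp_assoc typing)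
  also have "\<dots> = (rst y \<cdot> rst x) \<cdot> y" using a rst_commute[of x y] by simp
  also have "\<dots> = y" using a by (simp add: rst_comp_self)
  finally show ?thesis .
qed

lemma comp_rst_comp: "arr h \<Longrightarrow> arr g \<Longrightarrow> arr x \<Longrightarrow> cod h = dom g \<Longrightarrow> dom x = dom g \<Longrightarrow>
  h \<cdot> rst g \<cdot> x = rst (h \<cdot> g) \<cdot> h \<cdot> x"
  using comp_rst[of h g] by (simp add: comp_assoc[symmetric] typing)

lemma rst_commute_comp: "arr f \<Longrightarrow> arr g \<Longrightarrow> arr x \<Longrightarrow> dom f = dom g \<Longrightarrow> dom x = dom f \<Longrightarrow>
  rst f \<cdot> rst g \<cdot> x = rst g \<cdot> rst f \<cdot> x"
  by (simp add: comp_assoc[symmetric] typing rst_commute)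

lemma rst_idem_comp: "arr f \<Longrightarrow> arr x \<Longrightarrow> dom x = dom f \<Longrightarrow> rst f \<cdot> rst f \<cdot> x = rst f \<cdot> x"
  by (simp add: comp_assoc[symmetric] typing rst_idem)

lemma rst_comp_p0: "arr f \<Longrightarrow> cod f = Pr A B \<Longrightarrow> rst (f \<cdot> p0 A B) = rst f"
  by (rule rst_comp_total) (simp_all add: typing rst_p0)
lemma rst_comp_p1: "arr f \<Longrightarrow> cod f = Pr A B \<Longrightarrow> rst (f \<cdot> p1 A B) = rst f"
  by (rule rst_comp_total) (simp_all add: typing rst_p1)

lemma rst_pair: "arr f \<Longrightarrow> arr g \<Longrightarrow> dom f = dom g \<Longrightarrow> rst (pair f g) = rst f \<cdot> rst g"
proof -
  assume a: "arr f" "arr g" "dom f = dom g"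
  have "rst (pair f g) = rst (pair f g \<cdot> p0 (cod f) (cod g))" using a by (simp add: rst_comp_p0 typing)
  also have "\<dots> = rst (rst g \<cdot> f)" using a by (simp add: pair_comp_p0)
  also have "\<dots> = rst g \<cdot> rst f" using a by (simp add: rst_rst_comp)
  finally show ?thesis using a rst_commute[of f g] by simp
qed

lemma pair_eqI: "arr f \<Longrightarrow> arr g \<Longrightarrow> dom f = dom g \<Longrightarrow>
    arr f' \<Longrightarrow> arr g' \<Longrightarrow> dom f' = dom f \<Longrightarrow> dom g' = dom f \<Longrightarrow>
    cod f' = cod f \<Longrightarrow> cod g' = cod g \<Longrightarrow>
    rst g \<cdot> f = rst g' \<cdot> f' \<Longrightarrow> rst f \<cdot> g = rst f' \<cdot> g' \<Longrightarrow> pair f g = pair f' g'"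
  by (rule pair_unique[of f' g' "cod f" "cod g"]) (simp_all add: typing pair_comp_p0 pair_comp_p1)

lemma comp_pair: "arr h \<Longrightarrow> arr f \<Longrightarrow> arr g \<Longrightarrow> dom f = dom g \<Longrightarrow> cod h = dom f \<Longrightarrow>
   h \<cdot> pair f g = pair (h \<cdot> f) (h \<cdot> g)"
proof -
  assume a: "arr h" "arr f" "arr g" "dom f = dom g" "cod h = dom f"
  show ?thesis
  proof (rule pair_unique[of _ _ "cod f" "cod g"])
    show "(h \<cdot> pair f g) \<cdot> p0 (cod f) (cod g) = rst (h \<cdot> g) \<cdot> h \<cdot> f"
      using a by (simp add: comp_assoc typing pair_comp_p0 comp_rst_comp)
    show "(h \<cdot> pair f g) \<cdot> p1 (cod f) (cod g) = rst (h \<cdot> f) \<cdot> h \<cdot> g"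
      using a by (simp add: comp_assoc typing pair_comp_p1 comp_rst_comp)
  qed (use a in \<open>simp_all add: typing\<close>)
qed

lemmas rst_simps = comp_assoc typing rst_rst rst_idem rst_idem_comp rst_Id Id_comp comp_Id rst_p0
  rst_p1 rst_zer rst_pair rst_rst_comp rst_comp_self rst_commute rst_commute_comp

lemma rst_self_comp: "arr f \<Longrightarrow> arr x \<Longrightarrow> cod f = dom x \<Longrightarrow> rst f \<cdot> f \<cdot> x = f \<cdot> x"
  by (simp add: comp_assoc[symmetric] typing rst_comp_self)
lemma rst_self_absorb: assumes "arr f" "arr g" "dom g = dom f"
  shows "rst f \<cdot> rst g \<cdot> f = rst g \<cdot> f"
proof -
  have "rst f \<cdot> rst g \<cdot> f = rst g \<cdot> rst f \<cdot> f" by (rule rst_commute_comp) (use assms in simp_all)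
  also have "\<dots> = rst g \<cdot> f" using assms by (simp add: rst_comp_self)
  finally show ?thesis .
qed
lemma rst_self_absorb_comp: assumes "arr f" "arr g" "dom g = dom f" "arr x" "cod f = dom x"
  shows "rst f \<cdot> rst g \<cdot> f \<cdot> x = rst g \<cdot> f \<cdot> x"
proof -
  have "rst f \<cdot> rst g \<cdot> f \<cdot> x = rst g \<cdot> rst f \<cdot> f \<cdot> x"
    by (rule rst_commute_comp) (use assms in \<open>simp_all add: typing\<close>)
  also have "\<dots> = rst g \<cdot> f \<cdot> x" using assms by (simp add: rst_self_comp)
  finally show ?thesis .
qed
lemma rst_self_absorb2: assumes "arr f" "arr g" "arr h" "dom g = dom f" "dom h = dom f"
  shows "rst f \<cdot> rst g \<cdot> rst h \<cdot> f = rst g \<cdot> rst h \<cdot> f"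
proof -
  have "rst f \<cdot> rst g \<cdot> rst h \<cdot> f = rst g \<cdot> rst f \<cdot> rst h \<cdot> f"
    by (rule rst_commute_comp) (use assms in \<open>simp_all add: typing\<close>)
  also have "\<dots> = rst g \<cdot> rst h \<cdot> f" using assms by (simp add: rst_self_absorb)
  finally show ?thesis .
qed
lemma rst_self_absorb2_comp: assumes "arr f" "arr g" "arr h" "dom g = dom f" "dom h = dom f" "arr x" "cod f = dom x"
  shows "rst f \<cdot> rst g \<cdot> rst h \<cdot> f \<cdot> x = rst g \<cdot> rst h \<cdot> f \<cdot> x"
proof -
  have "rst f \<cdot> rst g \<cdot> rst h \<cdot> f \<cdot> x = rst g \<cdot> rst f \<cdot> rst h \<cdot> f \<cdot> x"
    by (rule rst_commute_comp) (use assms in \<open>simp_all add: typing\<close>)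
  also have "\<dots> = rst g \<cdot> rst h \<cdot> f \<cdot> x" using assms by (simp add: rst_self_absorb_comp)
  finally show ?thesis .
qed

lemma rst_rst_comp_left_comp: "arr f \<Longrightarrow> arr g \<Longrightarrow> cod f = dom g \<Longrightarrow>
    arr w \<Longrightarrow> dom w = dom f \<Longrightarrow>
    rst f \<cdot> rst (f \<cdot> g) \<cdot> w = rst (f \<cdot> g) \<cdot> w"
  using rst_rst_comp_left[of f g] by (simp add: comp_assoc[symmetric] typing)
lemma rst_rst_comp_left2: assumes "arr f" "arr g" "cod f = dom g" "arr y" "dom y = dom f"
  shows "rst f \<cdot> rst y \<cdot> rst (f \<cdot> g) = rst y \<cdot> rst (f \<cdot> g)"
proof -
  have "rst f \<cdot> rst y \<cdot> rst (f \<cdot> g) = rst y \<cdot> rst f \<cdot> rst (f \<cdot> g)"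
    by (rule rst_commute_comp) (use assms in \<open>simp_all add: typing\<close>)
  also have "\<dots> = rst y \<cdot> rst (f \<cdot> g)" using assms by (simp add: rst_rst_comp_left)
  finally show ?thesis .
qed

lemmas rst_absorb_simps = rst_simps rst_self_comp rst_self_absorb rst_self_absorb_comp
  rst_self_absorb2 rst_self_absorb2_comp rst_rst_comp_left rst_rst_comp_left_comp rst_rst_comp_left2

definition rst_le where "rst_le x y \<longleftrightarrow> rst x \<cdot> rst y = rst x"

lemma rst_le_refl: "arr x \<Longrightarrow> rst_le x x" unfolding rst_le_def by (simp add: rst_idem)

lemma rst_le_trans: "arr x \<Longrightarrow> arr y \<Longrightarrow> arr w \<Longrightarrow> dom x = dom y \<Longrightarrow>
    dom y = dom w \<Longrightarrow> rst_le x y \<Longrightarrow> rst_le y w \<Longrightarrow> rst_le x w"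
  unfolding rst_le_def
proof -
  assume a: "arr x" "arr y" "arr w" "dom x = dom y" "dom y = dom w" and h: "rst x \<cdot> rst y = rst x" "rst y \<cdot> rst w = rst y"
  have "rst x \<cdot> rst w = (rst x \<cdot> rst y) \<cdot> rst w" using h by simp
  also have "\<dots> = rst x \<cdot> (rst y \<cdot> rst w)" using a by (simp add: comp_assoc typing)
  also have "\<dots> = rst x" using h by simp
  finally show "rst x \<cdot> rst w = rst x" .
qed

lemma rst_le_comp: "arr f \<Longrightarrow> arr g \<Longrightarrow> cod f = dom g \<Longrightarrow> rst_le (f \<cdot> g) f"
  unfolding rst_le_def by (rule rst_rst_comp_right)

lemma rst_le_comp_left: "arr f \<Longrightarrow> arr g \<Longrightarrow> cod f = dom g \<Longrightarrow> arr y \<Longrightarrow>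
    dom y = dom f \<Longrightarrow> rst_le f y \<Longrightarrow> rst_le (f \<cdot> g) y"
  by (rule rst_le_trans[OF _ _ _ _ _ rst_le_comp]) (simp_all add: typing)

lemma rst_le_pair_fst: "arr f \<Longrightarrow> arr g \<Longrightarrow> dom f = dom g \<Longrightarrow> rst_le (pair f g) f"
  unfolding rst_le_def by (simp add: rst_pair rst_simps rst_commute_comp)
lemma rst_le_pair_snd: "arr f \<Longrightarrow> arr g \<Longrightarrow> dom f = dom g \<Longrightarrow> rst_le (pair f g) g"
  unfolding rst_le_def by (simp add: rst_pair rst_simps rst_commute_comp)

lemma rst_le_pair_left1: "arr f \<Longrightarrow> arr g \<Longrightarrow> dom f = dom g \<Longrightarrow>
    arr y \<Longrightarrow> dom y = dom f \<Longrightarrow> rst_le f y \<Longrightarrow> rst_le (pair f g) y"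
  by (rule rst_le_trans[OF _ _ _ _ _ rst_le_pair_fst]) (simp_all add: typing)
lemma rst_le_pair_left2: "arr f \<Longrightarrow> arr g \<Longrightarrow> dom f = dom g \<Longrightarrow>
    arr y \<Longrightarrow> dom y = dom f \<Longrightarrow> rst_le g y \<Longrightarrow> rst_le (pair f g) y"
  by (rule rst_le_trans[OF _ _ _ _ _ rst_le_pair_snd]) (simp_all add: typing)

lemma rst_le_rst_comp: "arr e \<Longrightarrow> arr f \<Longrightarrow> dom e = dom f \<Longrightarrow> rst_le (rst e \<cdot> f) e"
  unfolding rst_le_def by (simp add: rst_simps rst_commute_comp)
lemma rst_le_rst_comp_left: "arr e \<Longrightarrow> arr f \<Longrightarrow> dom e = dom f \<Longrightarrow>
    arr y \<Longrightarrow> dom y = dom f \<Longrightarrow> rst_le f y \<Longrightarrow>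
    rst_le (rst e \<cdot> f) y"
  unfolding rst_le_def by (simp add: rst_simps rst_commute_comp)

lemma rst_le_oplus_fst: "arr f \<Longrightarrow> arr g \<Longrightarrow> dom f = dom g \<Longrightarrow> cod f = cod g \<Longrightarrow> rst_le (f \<oplus> g) f"
  unfolding rst_le_def by (simp add: rst_simps rst_oplus)
lemma rst_le_oplus_snd: "arr f \<Longrightarrow> arr g \<Longrightarrow> dom f = dom g \<Longrightarrow> cod f = cod g \<Longrightarrow> rst_le (f \<oplus> g) g"
  unfolding rst_le_def by (simp add: rst_simps rst_oplus)
lemma rst_le_oplus_left1: "arr f \<Longrightarrow> arr g \<Longrightarrow> dom f = dom g \<Longrightarrow>
    cod f = cod g \<Longrightarrow> arr y \<Longrightarrow> dom y = dom f \<Longrightarrow> rst_le f y \<Longrightarrow>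
    rst_le (f \<oplus> g) y"
  by (rule rst_le_trans[OF _ _ _ _ _ rst_le_oplus_fst]) (simp_all add: typing)
lemma rst_le_oplus_left2: "arr f \<Longrightarrow> arr g \<Longrightarrow> dom f = dom g \<Longrightarrow>
    cod f = cod g \<Longrightarrow> arr y \<Longrightarrow> dom y = dom f \<Longrightarrow> rst_le g y \<Longrightarrow>
    rst_le (f \<oplus> g) y"
  by (rule rst_le_trans[OF _ _ _ _ _ rst_le_oplus_snd]) (simp_all add: typing)

lemma rst_le_absorb: "arr x \<Longrightarrow> arr y \<Longrightarrow> dom x = dom y \<Longrightarrow> rst_le y x \<Longrightarrow> rst x \<cdot> y = y"
  unfolding rst_le_def by (rule rst_absorb)

lemma pair_rst_left: "arr e \<Longrightarrow> arr f \<Longrightarrow> arr g \<Longrightarrow> dom e = dom f \<Longrightarrow> dom f = dom g \<Longrightarrow>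
  pair (rst e \<cdot> f) g = rst e \<cdot> pair f g"
proof -
  assume a: "arr e" "arr f" "arr g" "dom e = dom f" "dom f = dom g"
  have "rst e \<cdot> pair f g = pair (rst e \<cdot> f) (rst e \<cdot> g)" using a by (simp add: comp_pair typing)
  also have "\<dots> = pair (rst e \<cdot> f) g"
    by (rule pair_eqI) (use a in \<open>simp_all add: rst_simps rst_commute_comp\<close>)
  finally show ?thesis by simp
qed

lemma pair_rst_right: "arr e \<Longrightarrow> arr f \<Longrightarrow> arr g \<Longrightarrow> dom e = dom f \<Longrightarrow> dom f = dom g \<Longrightarrow>
  pair f (rst e \<cdot> g) = rst e \<cdot> pair f g"
proof -
  assume a: "arr e" "arr f" "arr g" "dom e = dom f" "dom f = dom g"
  have "rst e \<cdot> pair f g = pair (rst e \<cdot> f) (rst e \<cdot> g)" using a by (simp add: comp_pair typing)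
  also have "\<dots> = pair f (rst e \<cdot> g)"
    by (rule pair_eqI) (use a in \<open>simp_all add: rst_simps rst_commute_comp\<close>)
  finally show ?thesis by simp
qed

lemma pair_comp_p0_comp: "arr f \<Longrightarrow> arr g \<Longrightarrow> dom f = dom g \<Longrightarrow>
    cod f = A \<Longrightarrow> cod g = B \<Longrightarrow> arr x \<Longrightarrow>
    dom x = A \<Longrightarrow>
   pair f g \<cdot> p0 A B \<cdot> x = rst g \<cdot> f \<cdot> x"
  using pair_comp_p0[of f g A B] by (simp add: comp_assoc[symmetric] typing)
lemma pair_comp_p1_comp: "arr f \<Longrightarrow> arr g \<Longrightarrow> dom f = dom g \<Longrightarrow>
    cod f = A \<Longrightarrow> cod g = B \<Longrightarrow> arr x \<Longrightarrow>
    dom x = B \<Longrightarrow>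
   pair f g \<cdot> p1 A B \<cdot> x = rst f \<cdot> g \<cdot> x"
  using pair_comp_p1[of f g A B] by (simp add: comp_assoc[symmetric] typing)

lemma comp_pair_comp: "arr h \<Longrightarrow> arr f \<Longrightarrow> arr g \<Longrightarrow> dom f = dom g \<Longrightarrow>
    cod h = dom f \<Longrightarrow> arr x \<Longrightarrow> dom x = Pr (cod f) (cod g) \<Longrightarrow>
   h \<cdot> pair f g \<cdot> x = pair (h \<cdot> f) (h \<cdot> g) \<cdot> x"
  using comp_pair[of h f g] by (simp add: comp_assoc[symmetric] typing)

lemma pair_comp_cross_rst: "arr a \<Longrightarrow> arr b \<Longrightarrow> dom a = dom b \<Longrightarrow>
    arr h \<Longrightarrow> arr k \<Longrightarrow> cod a = dom h \<Longrightarrow>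
    cod b = dom k \<Longrightarrow>
   pair a b \<cdot> cross h k = pair (rst b \<cdot> a \<cdot> h) (rst a \<cdot> b \<cdot> k)"
  unfolding cross_unfold by (simp add: comp_pair typing pair_comp_p0_comp pair_comp_p1_comp)

lemma pair_comp_cross: "arr a \<Longrightarrow> arr b \<Longrightarrow> dom a = dom b \<Longrightarrow> arr h \<Longrightarrow>
    arr k \<Longrightarrow> cod a = dom h \<Longrightarrow> cod b = dom k \<Longrightarrow>
   rst h = Id (dom h) \<Longrightarrow> rst k = Id (dom k) \<Longrightarrow>
   pair a b \<cdot> cross h k = pair (a \<cdot> h) (b \<cdot> k)"
proof -
  assume a: "arr a" "arr b" "dom a = dom b" "arr h" "arr k" "cod a = dom h" "cod b = dom k"
    "rst h = Id (dom h)" "rst k = Id (dom k)"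
  have "pair a b \<cdot> cross h k = pair (rst b \<cdot> a \<cdot> h) (rst a \<cdot> b \<cdot> k)" using a by (simp add: pair_comp_cross_rst)
  also have "\<dots> = pair (a \<cdot> h) (b \<cdot> k)"
    by (rule pair_eqI) (use a in \<open>simp_all add: rst_absorb_simps rst_comp_total\<close>)
  finally show ?thesis .
qed

lemmas rst_le_intros = rst_le_refl rst_le_comp_left rst_le_pair_left1 rst_le_pair_left2 rst_le_rst_comp_left rst_le_oplus_left1 rst_le_oplus_left2

section \<open>Reverse derivatives evaluated at pairs\<close>

lemma pair_R_comp:
  assumes a: "arr p" "arr s" "arr h" "arr k" "dom s = dom p" "cod p = dom h" "cod h = dom k" "cod s = cod k"
  shows "pair p s \<cdot> R (h \<cdot> k) = pair p (pair (p \<cdot> h) s \<cdot> R k) \<cdot> R h"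
proof -
  let ?X = "dom h" and ?Z = "cod k"
  let ?V = "pair (p \<cdot> h) s \<cdot> R k"
  have "pair p s \<cdot> R (h \<cdot> k) = pair p s \<cdot> pair (p0 ?X ?Z) (pair (p0 ?X ?Z \<cdot> h) (p1 ?X ?Z) \<cdot> R k) \<cdot> R h"
    using a by (simp add: RD5)
  also have "\<dots> = pair (pair p s \<cdot> p0 ?X ?Z) (pair p s \<cdot> pair (p0 ?X ?Z \<cdot> h) (p1 ?X ?Z) \<cdot> R k) \<cdot> R h"
    using a by (simp add: comp_pair_comp typing)
  also have "\<dots> = pair (rst s \<cdot> p) (pair (rst s \<cdot> p \<cdot> h) (rst p \<cdot> s) \<cdot> R k) \<cdot> R h"
    using a by (simp add: comp_pair_comp comp_pair pair_comp_p0 pair_comp_p1 pair_comp_p0_comp typing)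
  also have "pair (rst s \<cdot> p \<cdot> h) (rst p \<cdot> s) = rst s \<cdot> rst p \<cdot> pair (p \<cdot> h) s"
    using a by (simp add: pair_rst_left pair_rst_right rst_simps)
  also have "pair (rst s \<cdot> p) ((rst s \<cdot> rst p \<cdot> pair (p \<cdot> h) s) \<cdot> R k) = rst s \<cdot> rst p \<cdot> pair p ?V"
    using a by (simp add: pair_rst_left pair_rst_right typing rst_simps)
  also have "(rst s \<cdot> rst p \<cdot> pair p ?V) \<cdot> R h = rst s \<cdot> rst p \<cdot> (pair p ?V \<cdot> R h)"
    using a by (simp add: typing comp_assoc)
  also have "\<dots> = pair p ?V \<cdot> R h"
  proof -
    have l1: "rst_le (pair p ?V \<cdot> R h) p" by (insert a, (rule rst_le_intros | simp add: typing)+)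
    have l2: "rst_le (pair p ?V \<cdot> R h) s" by (insert a, (rule rst_le_intros | simp add: typing)+)
    have "rst p \<cdot> (pair p ?V \<cdot> R h) = pair p ?V \<cdot> R h"
      by (rule rst_le_absorb[OF _ _ _ l1]) (use a in \<open>simp_all add: typing\<close>)
    moreover have "rst s \<cdot> (pair p ?V \<cdot> R h) = pair p ?V \<cdot> R h"
      by (rule rst_le_absorb[OF _ _ _ l2]) (use a in \<open>simp_all add: typing\<close>)
    ultimately show ?thesis by simp
  qed
  finally show ?thesis .
qed

lemma pair_p0_p1: "pair (p0 A B) (p1 A B) = Id (Pr A B)"
proof -
  have "Id (Pr A B) = pair (p0 A B) (p1 A B)"
    by (rule pair_unique[of "p0 A B" "p1 A B" A B]) (simp_all add: typing rst_p0 rst_p1 Id_comp)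
  then show ?thesis by simp
qed

lemma R_Id: "R (Id A) = p1 A A"
proof -
  have "R (rst (Id A)) = cross (rst (Id A)) (Id A) \<cdot> p1 A A" using RD9[of "Id A"] by (simp add: typing)
  then show ?thesis by (simp add: rst_Id cross_unfold typing comp_Id pair_p0_p1 Id_comp)
qed

lemma pair_comp_cross_comp: "arr a \<Longrightarrow> arr b \<Longrightarrow> dom a = dom b \<Longrightarrow>
    arr h \<Longrightarrow> arr k \<Longrightarrow> cod a = dom h \<Longrightarrow>
    cod b = dom k \<Longrightarrow>
   rst h = Id (dom h) \<Longrightarrow> rst k = Id (dom k) \<Longrightarrow> arr x \<Longrightarrow> dom x = Pr (cod h) (cod k) \<Longrightarrow>
   pair a b \<cdot> cross h k \<cdot> x = pair (a \<cdot> h) (b \<cdot> k) \<cdot> x"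
  using pair_comp_cross[of a b h k] by (simp add: comp_assoc[symmetric] typing)

lemma comp_iota0: assumes "arr p" "cod p = X" shows "p \<cdot> iota0 C X Y = pair p (zer (dom p) Y)"
proof -
  have "p \<cdot> iota0 C X Y = pair (p \<cdot> Id X) (p \<cdot> zer X Y)" unfolding iota0_def using assms by (simp add: comp_pair typing)
  also have "\<dots> = pair p (rst p \<cdot> zer (dom p) Y)" using assms by (simp add: comp_Id comp_zer)
  also have "\<dots> = rst p \<cdot> pair p (zer (dom p) Y)" using assms by (simp add: pair_rst_right typing)
  also have "\<dots> = pair (rst p \<cdot> p) (zer (dom p) Y)" using assms by (simp add: pair_rst_left typing)
  also have "\<dots> = pair p (zer (dom p) Y)" using assms by (simp add: rst_comp_self)
  finally show ?thesis .
qed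

lemma pair_R_pair: assumes "arr q" "arr w" "arr u" "arr v" "dom w = dom q" "cod q = dom u" "dom u = dom v" "cod w = Pr (cod u) (cod v)"
  shows "pair q w \<cdot> R (pair u v) = pair q (w \<cdot> p0 (cod u) (cod v)) \<cdot> R u \<oplus> pair q (w \<cdot> p1 (cod u) (cod v)) \<cdot> R v"
  using assms by (simp add: RD4 comp_oplus typing pair_comp_cross_comp rst_p0 rst_p1 rst_Id comp_Id)

lemma pair_R_p0: assumes "arr q" "arr w" "dom w = dom q" "cod q = Pr A B" "cod w = A"
  shows "pair q w \<cdot> R (p0 A B) = rst q \<cdot> pair w (zer (dom q) B)"
proof -
  have "pair q w \<cdot> R (p0 A B) = (pair q w \<cdot> p1 (Pr A B) A) \<cdot> iota0 C A B"
    using assms by (simp add: RD3_p0 comp_assoc typing)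
  also have "\<dots> = rst q \<cdot> w \<cdot> iota0 C A B" using assms by (simp add: pair_comp_p1 comp_assoc typing)
  also have "\<dots> = rst q \<cdot> pair w (zer (dom q) B)" using assms by (simp add: comp_iota0)
  finally show ?thesis .
qed

lemma comp_iota1: assumes "arr p" "cod p = Y" shows "p \<cdot> iota1 C X Y = pair (zer (dom p) X) p"
proof -
  have "p \<cdot> iota1 C X Y = pair (p \<cdot> zer Y X) (p \<cdot> Id Y)" unfolding iota1_def using assms by (simp add: comp_pair typing)
  also have "\<dots> = pair (rst p \<cdot> zer (dom p) X) p" using assms by (simp add: comp_Id comp_zer)
  also have "\<dots> = rst p \<cdot> pair (zer (dom p) X) p" using assms by (simp add: pair_rst_left typing)
  also have "\<dots> = pair (zer (dom p) X) (rst p \<cdot> p)" using assms by (simp add: pair_rst_right typing)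
  also have "\<dots> = pair (zer (dom p) X) p" using assms by (simp add: rst_comp_self)
  finally show ?thesis .
qed

lemma pair_R_p1: assumes "arr q" "arr w" "dom w = dom q" "cod q = Pr A B" "cod w = B"
  shows "pair q w \<cdot> R (p1 A B) = rst q \<cdot> pair (zer (dom q) A) w"
proof -
  have "pair q w \<cdot> R (p1 A B) = (pair q w \<cdot> p1 (Pr A B) B) \<cdot> iota1 C A B"
    using assms by (simp add: RD3_p1 comp_assoc typing)
  also have "\<dots> = rst q \<cdot> w \<cdot> iota1 C A B" using assms by (simp add: pair_comp_p1 comp_assoc typing)
  also have "\<dots> = rst q \<cdot> pair (zer (dom q) A) w" using assms by (simp add: comp_iota1)
  finally show ?thesis .
qed

lemma pair_R_Id: assumes "arr q" "arr w" "dom w = dom q" "cod q = A" "cod w = A"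
  shows "pair q w \<cdot> R (Id A) = rst q \<cdot> w"
  using assms by (simp add: R_Id pair_comp_p1)

lemma pair_R_p0_comp_p1: assumes "arr q" "arr w" "dom w = dom q" "cod q = Pr A B" "cod w = A"
  shows "(pair q w \<cdot> R (p0 A B)) \<cdot> p1 A B = rst q \<cdot> rst w \<cdot> zer (dom q) B"
  using assms by (simp add: pair_R_p0 comp_assoc typing pair_comp_p1)

lemma pair_R_p1_comp_p1: assumes "arr q" "arr w" "dom w = dom q" "cod q = Pr A B" "cod w = B"
  shows "(pair q w \<cdot> R (p1 A B)) \<cdot> p1 A B = rst q \<cdot> w"
  using assms by (simp add: pair_R_p1 comp_assoc typing pair_comp_p1 rst_zer Id_comp)

lemma rst_pair_R: assumes "arr x" "arr y" "arr h" "dom y = dom x" "cod x = dom h" "cod y = cod h"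
  shows "rst (pair x y \<cdot> R h) = rst (x \<cdot> h) \<cdot> rst y"
proof -
  have "rst (pair x y \<cdot> R h) = rst (pair x y \<cdot> rst (R h))" using assms by (simp add: rst_comp_rst typing)
  also have "\<dots> = rst (pair x y \<cdot> cross (rst h) (Id (cod h)))" using assms by (simp add: RD8)
  also have "\<dots> = rst (pair (rst y \<cdot> x \<cdot> rst h) (rst x \<cdot> y \<cdot> Id (cod h)))" using assms
    by (simp add: pair_comp_cross_rst typing)
  also have "\<dots> = rst (x \<cdot> h) \<cdot> rst y" using assms by (simp add: rst_absorb_simps comp_Id rst_comp_rst)
  finally show ?thesis .
qed

section \<open>The derivative D\<close>

abbreviation D where "D \<equiv> Dop C"

lemma D_unfold: "arr g \<Longrightarrow> D g = cross (iota0 C (dom g) (cod g)) (Id (dom g)) \<cdot> R (R g) \<cdot> p1 (dom g) (cod g)"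
  unfolding Dop_def dagger_def by (simp add: comp_assoc typing)

lemma arr_D[typing]: "arr g \<Longrightarrow> arr (D g)" and dom_D[typing]: "arr g \<Longrightarrow> dom (D g) = Pr (dom g) (dom g)"
  and cod_D[typing]: "arr g \<Longrightarrow> cod (D g) = cod g"
  by (simp_all add: D_unfold typing)

lemma rst_iota0: "rst (iota0 C A B) = Id A"
  unfolding iota0_def by (simp add: rst_pair typing rst_Id rst_zer Id_comp)

lemma pair_D: assumes "arr g" "arr p" "arr v" "dom v = dom p" "cod p = dom g" "cod v = dom g"
  shows "pair p v \<cdot> D g = pair (pair p (zer (dom p) (cod g))) v \<cdot> R (R g) \<cdot> p1 (dom g) (cod g)"
  using assms by (simp add: D_unfold pair_comp_cross_comp rst_iota0 rst_Id typing comp_iota0 comp_Id)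

lemma rst_pair_D: assumes "arr g" "arr p" "arr v" "dom v = dom p" "cod p = dom g" "cod v = dom g"
  shows "rst (pair p v \<cdot> D g) = rst (p \<cdot> g) \<cdot> rst v"
proof -
  have "rst (pair p v \<cdot> D g) = rst (pair (pair p (zer (dom p) (cod g))) v \<cdot> R (R g))"
    using assms by (simp add: pair_D comp_assoc[symmetric] typing rst_comp_p1)
  also have "\<dots> = rst (pair p (zer (dom p) (cod g)) \<cdot> R g) \<cdot> rst v" using assms by (simp add: rst_pair_R typing)
  also have "\<dots> = rst (p \<cdot> g) \<cdot> rst v" using assms by (simp add: rst_pair_R typing rst_zer comp_Id)
  finally show ?thesis .
qed

lemma rst_le_meet_right: "arr x \<Longrightarrow> arr y \<Longrightarrow> arr a \<Longrightarrow> arr b \<Longrightarrow>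
    dom x = dom y \<Longrightarrow> dom a = dom y \<Longrightarrow> dom b = dom y \<Longrightarrow>
   rst y = rst a \<cdot> rst b \<Longrightarrow> rst_le x a \<Longrightarrow> rst_le x b \<Longrightarrow> rst_le x y"
  unfolding rst_le_def
proof -
  assume a: "arr x" "arr y" "arr a" "arr b" "dom x = dom y" "dom a = dom y" "dom b = dom y"
    "rst y = rst a \<cdot> rst b" "rst x \<cdot> rst a = rst x" "rst x \<cdot> rst b = rst x"
  have "rst x \<cdot> (rst a \<cdot> rst b) = (rst x \<cdot> rst a) \<cdot> rst b"
    by (rule comp_assoc[symmetric]) (use a in \<open>simp_all add: typing\<close>)
  then show "rst x \<cdot> rst y = rst x" using a by simp
qed

lemma rst_le_total: "arr x \<Longrightarrow> arr y \<Longrightarrow> dom x = dom y \<Longrightarrow> rst y = Id (dom y) \<Longrightarrow> rst_le x y"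
  unfolding rst_le_def by (simp add: comp_Id typing)

lemma rst_le_pair_R_left1: assumes "arr x" "arr w" "arr h" "dom w = dom x" "cod x = dom h" "cod w = cod h"
  "arr y" "dom y = dom x" "rst_le (x \<cdot> h) y" shows "rst_le (pair x w \<cdot> R h) y"
  by (rule rst_le_trans[of _ "x \<cdot> h"]) (use assms in \<open>simp_all add: typing rst_le_def rst_pair_R rst_absorb_simps\<close>)
lemma rst_le_pair_R_left2: assumes "arr x" "arr w" "arr h" "dom w = dom x" "cod x = dom h" "cod w = cod h"
  "arr y" "dom y = dom x" "rst_le w y" shows "rst_le (pair x w \<cdot> R h) y"
  by (rule rst_le_trans[of _ "w"]) (use assms in \<open>simp_all add: typing rst_le_def rst_pair_R rst_absorb_simps\<close>)
lemma rst_le_pair_R_right: assumes "arr x" "arr w" "arr h" "dom w = dom x" "cod x = dom h" "cod w = cod h"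
  "arr y" "dom y = dom x" "rst_le y (x \<cdot> h)" "rst_le y w" shows "rst_le y (pair x w \<cdot> R h)"
  by (rule rst_le_meet_right[of _ _ "x \<cdot> h" w]) (use assms in \<open>simp_all add: typing rst_pair_R\<close>)

lemma rst_le_pair_D_left1: assumes "arr g" "arr p" "arr v" "dom v = dom p" "cod p = dom g" "cod v = dom g"
  "arr y" "dom y = dom p" "rst_le (p \<cdot> g) y" shows "rst_le (pair p v \<cdot> D g) y"
  by (rule rst_le_trans[of _ "p \<cdot> g"]) (use assms in \<open>simp_all add: typing rst_le_def rst_pair_D rst_absorb_simps\<close>)
lemma rst_le_pair_D_left2: assumes "arr g" "arr p" "arr v" "dom v = dom p" "cod p = dom g" "cod v = dom g"
  "arr y" "dom y = dom p" "rst_le v y" shows "rst_le (pair p v \<cdot> D g) y"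
  by (rule rst_le_trans[of _ "v"]) (use assms in \<open>simp_all add: typing rst_le_def rst_pair_D rst_absorb_simps\<close>)
lemma rst_le_pair_D_right: assumes "arr g" "arr p" "arr v" "dom v = dom p" "cod p = dom g" "cod v = dom g"
  "arr y" "dom y = dom p" "rst_le y (p \<cdot> g)" "rst_le y v" shows "rst_le y (pair p v \<cdot> D g)"
  by (rule rst_le_meet_right[of _ _ "p \<cdot> g" v]) (use assms in \<open>simp_all add: typing rst_pair_D\<close>)

lemma rst_le_pair_right: "arr a \<Longrightarrow> arr b \<Longrightarrow> dom a = dom b \<Longrightarrow>
    arr y \<Longrightarrow> dom y = dom a \<Longrightarrow> rst_le y a \<Longrightarrow> rst_le y b \<Longrightarrow>
    rst_le y (pair a b)"
  by (rule rst_le_meet_right[of _ _ a b]) (simp_all add: typing rst_pair)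
lemma rst_le_rst_comp_right: "arr e \<Longrightarrow> arr f \<Longrightarrow> dom e = dom f \<Longrightarrow>
    arr y \<Longrightarrow> dom y = dom f \<Longrightarrow> rst_le y e \<Longrightarrow> rst_le y f \<Longrightarrow>
    rst_le y (rst e \<cdot> f)"
  by (rule rst_le_meet_right[of _ _ e f]) (simp_all add: typing rst_rst_comp)
lemma rst_le_oplus_right: "arr f \<Longrightarrow> arr g \<Longrightarrow> dom f = dom g \<Longrightarrow>
    cod f = cod g \<Longrightarrow> arr y \<Longrightarrow> dom y = dom f \<Longrightarrow> rst_le y f \<Longrightarrow>
    rst_le y g \<Longrightarrow> rst_le y (f \<oplus> g)"
  by (rule rst_le_meet_right[of _ _ f g]) (simp_all add: typing rst_oplus)
lemma rst_le_comp_total_right: "arr a \<Longrightarrow> arr g \<Longrightarrow> cod a = dom g \<Longrightarrow>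
    rst g = Id (dom g) \<Longrightarrow> arr y \<Longrightarrow> dom y = dom a \<Longrightarrow> rst_le y a \<Longrightarrow>
    rst_le y (a \<cdot> g)"
  unfolding rst_le_def by (simp add: rst_comp_total)
lemma rst_le_zer: "arr y \<Longrightarrow> dom y = A \<Longrightarrow> rst_le y (zer A B)"
  by (rule rst_le_total) (simp_all add: typing rst_zer)
lemma rst_le_p0: "arr y \<Longrightarrow> dom y = Pr A B \<Longrightarrow> rst_le y (p0 A B)"
  by (rule rst_le_total) (simp_all add: typing rst_p0)
lemma rst_le_p1: "arr y \<Longrightarrow> dom y = Pr A B \<Longrightarrow> rst_le y (p1 A B)"
  by (rule rst_le_total) (simp_all add: typing rst_p1)
lemma rst_le_Id: "arr y \<Longrightarrow> dom y = A \<Longrightarrow> rst_le y (Id A)"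
  by (rule rst_le_total) (simp_all add: typing rst_Id)

lemma rst_le_comp_mono: assumes "arr a" "arr b" "arr c" "cod a = dom b" "dom c = dom b" "rst_le b c"
  shows "rst_le (a \<cdot> b) (a \<cdot> c)"
proof -
  have bc: "rst b = rst c \<cdot> rst b" using assms rst_commute[of b c] by (simp add: rst_le_def)
  have "rst (a \<cdot> b) = rst (a \<cdot> rst b)" using assms by (simp add: rst_comp_rst)
  also have "\<dots> = rst (a \<cdot> (rst c \<cdot> rst b))" using bc by simp
  also have "\<dots> = rst ((a \<cdot> rst c) \<cdot> rst b)" using assms by (simp add: comp_assoc typing)
  finally have 1: "rst (a \<cdot> b) = rst ((a \<cdot> rst c) \<cdot> rst b)" .
  have 2: "rst (a \<cdot> c) = rst (a \<cdot> rst c)" using assms by (simp add: rst_comp_rst)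
  have "rst_le ((a \<cdot> rst c) \<cdot> rst b) (a \<cdot> rst c)" by (rule rst_le_comp) (use assms in \<open>simp_all add: typing\<close>)
  then show ?thesis unfolding rst_le_def 1 2 .
qed

lemmas rst_le_rules = rst_le_refl rst_le_zer rst_le_p0 rst_le_p1 rst_le_Id rst_le_pair_right
  rst_le_rst_comp_right rst_le_oplus_right rst_le_pair_R_right rst_le_pair_D_right rst_le_comp_mono
  rst_le_comp_total_right
  rst_le_comp_left rst_le_pair_left1 rst_le_pair_left2 rst_le_rst_comp_left rst_le_oplus_left1 rst_le_oplus_left2 rst_le_pair_R_left1 rst_le_pair_R_left2 rst_le_pair_D_left1 rst_le_pair_D_left2

lemma rst_zer_oplus: assumes "arr a" "arr M" "dom a = dom M" "rst_le M a"
  shows "rst a \<cdot> zer (dom M) (cod M) \<oplus> M = M"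
proof -
  let ?X = "rst a \<cdot> zer (dom M) (cod M) \<oplus> M"
  have rX: "rst ?X = rst M" using assms rst_commute[of M a] by (simp add: rst_oplus typing rst_rst_comp rst_zer comp_Id rst_le_def)
  have "?X = rst ?X \<cdot> ?X" using assms by (simp add: rst_comp_self typing)
  also have "\<dots> = rst M \<cdot> (rst a \<cdot> zer (dom M) (cod M)) \<oplus> rst M \<cdot> M" using assms rX by (simp add: comp_oplus typing)
  also have "rst M \<cdot> (rst a \<cdot> zer (dom M) (cod M)) = rst M \<cdot> zer (dom M) (cod M)"
    using assms by (simp add: comp_assoc[symmetric] typing rst_le_def)
  also have "rst M \<cdot> zer (dom M) (cod M) \<oplus> rst M \<cdot> M = rst M \<cdot> (zer (dom M) (cod M) \<oplus> M)"
    using assms by (simp add: comp_oplus typing)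
  also have "zer (dom M) (cod M) \<oplus> M = M" using assms oplus_commute[of M "zer (dom M) (cod M)"] by (simp add: typing oplus_zer)
  finally show ?thesis using assms by (simp add: rst_comp_self)
qed

lemma rst_rst_zer_oplus: assumes "arr a" "arr b" "arr M" "dom a = dom M" "dom b = dom M" "rst_le M a" "rst_le M b"
  shows "rst a \<cdot> rst b \<cdot> zer (dom M) (cod M) \<oplus> M = M"
proof -
  have "rst_le M (rst a \<cdot> b)" by (rule rst_le_rst_comp_right) (use assms in simp_all)
  hence "rst (rst a \<cdot> b) \<cdot> zer (dom M) (cod M) \<oplus> M = M"
    by (rule rst_zer_oplus[rotated 3]) (use assms in \<open>simp_all add: typing\<close>)
  thus ?thesis using assms by (simp add: rst_rst_comp comp_assoc typing)
qed

lemma rst_le_comp_p0_right: "arr a \<Longrightarrow> cod a = Pr A B \<Longrightarrow> arr y \<Longrightarrow>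
    dom y = dom a \<Longrightarrow> rst_le y a \<Longrightarrow> rst_le y (a \<cdot> p0 A B)"
  by (rule rst_le_comp_total_right) (simp_all add: typing rst_p0)
lemma rst_le_comp_p1_right: "arr a \<Longrightarrow> cod a = Pr A B \<Longrightarrow> arr y \<Longrightarrow>
    dom y = dom a \<Longrightarrow> rst_le y a \<Longrightarrow> rst_le y (a \<cdot> p1 A B)"
  by (rule rst_le_comp_total_right) (simp_all add: typing rst_p1)

lemma pair_D_comp_expand:
  assumes u: "arr u" and G: "arr G" "cod u = dom G" and p: "arr p" "cod p = dom u"
    and v: "arr v" "dom v = dom p" "cod v = dom u"
  defines "e \<equiv> rst (p \<cdot> u \<cdot> G)"
  defines "t \<equiv> e \<cdot> pair (pair p (zer (dom p) (cod u))) v \<cdot> R (R u)"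
  defines "y \<equiv> pair (pair (p \<cdot> u) (zer (dom p) (cod G))) (t \<cdot> p1 (dom u) (cod u)) \<cdot> R (R G)"
  shows "pair p v \<cdot> D (u \<cdot> G) =
    rst p \<cdot> rst t \<cdot> zer (dom p) (cod G) \<oplus>
    (rst p \<cdot> rst (pair p (y \<cdot> p0 (cod u) (cod G)) \<cdot> R u) \<cdot> zer (dom p) (cod G) \<oplus>
     rst p \<cdot> e \<cdot> pair (p \<cdot> u) (pair p v \<cdot> D u) \<cdot> D G)"
proof -
  let ?X = "dom u" and ?Y = "cod u" and ?Z = "cod G" and ?T = "dom p"
  let ?q = "pair p (zer ?T ?Z)" and ?q' = "pair p (zer ?T ?Y)"
  let ?W = "pair (p0 ?X ?Z \<cdot> u) (p1 ?X ?Z) \<cdot> R G"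
  let ?m = "pair (p0 ?X ?Z) ?W"
  let ?t1 = "t \<cdot> p1 ?X ?Y"
  let ?n = "pair (p0 ?X ?Z \<cdot> u) (p1 ?X ?Z)"
  let ?q2 = "pair (p \<cdot> u) (zer ?T ?Z)"
  note a = u G p v
  have tyt: "arr t" "dom t = ?T" "cod t = Pr ?X ?Y" using a unfolding t_def e_def by (simp_all add: typing)
  have rq: "rst ?q = rst p" using a by (simp add: rst_pair typing rst_zer comp_Id)
  have qm: "?q \<cdot> ?m = e \<cdot> ?q'"
  proof -
    have "?q \<cdot> ?m = pair p (pair (p \<cdot> u) (rst p \<cdot> zer ?T ?Z) \<cdot> R G)"
      using a by (simp add: comp_pair comp_pair_comp pair_comp_p0 pair_comp_p0_comp pair_comp_p1 typing rst_zer Id_comp)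
    also have "pair (p \<cdot> u) (rst p \<cdot> zer ?T ?Z) \<cdot> R G = rst p \<cdot> e \<cdot> zer ?T ?Y"
      using a RD2_zero[of "p \<cdot> u" G] unfolding e_def by (simp add: pair_rst_right comp_assoc typing)
    also have "rst p \<cdot> e \<cdot> zer ?T ?Y = e \<cdot> zer ?T ?Y"
      using a unfolding e_def by (simp add: rst_rst_comp_left_comp typing)
    finally show ?thesis using a unfolding e_def by (simp add: pair_rst_right typing)
  qed
  have "pair p v \<cdot> D (u \<cdot> G) = pair ?q v \<cdot> R (?m \<cdot> R u) \<cdot> p1 ?X ?Z"
    using a by (simp add: pair_D typing RD5)
  also have "\<dots> = pair ?q (pair (?q \<cdot> ?m) v \<cdot> R (R u)) \<cdot> R ?m \<cdot> p1 ?X ?Z"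
    using a by (simp add: pair_R_comp[symmetric] comp_assoc[symmetric] typing)
  also have "pair (?q \<cdot> ?m) v \<cdot> R (R u) = t"
    using a unfolding qm t_def e_def by (simp add: pair_rst_left typing comp_assoc)
  finally have L1: "pair p v \<cdot> D (u \<cdot> G) = (pair ?q t \<cdot> R ?m) \<cdot> p1 ?X ?Z"
    using a tyt by (simp add: comp_assoc typing)
  have qn: "?q \<cdot> ?n = ?q2"
  proof -
    have "?q \<cdot> ?n = pair (p \<cdot> u) (rst p \<cdot> zer ?T ?Z)"
      using a by (simp add: comp_pair pair_comp_p0_comp pair_comp_p1 typing rst_zer Id_comp)
    also have "\<dots> = rst p \<cdot> ?q2" using a by (simp add: pair_rst_right typing)
    also have "\<dots> = ?q2" by (rule rst_le_absorb) (insert a, (rule rst_le_rules | simp add: typing comp_assoc)+)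
    finally show ?thesis .
  qed
  have L2: "pair ?q t \<cdot> R ?m = pair ?q (t \<cdot> p0 ?X ?Y) \<cdot> R (p0 ?X ?Z) \<oplus> pair ?q y \<cdot> R ?n"
    using a tyt pair_R_pair[of ?q t "p0 ?X ?Z" ?W] pair_R_comp[of ?q ?t1 ?n "R G"] qn
    unfolding y_def by (simp add: typing)
  have L3: "pair ?q y \<cdot> R ?n =
      pair ?q (pair p (y \<cdot> p0 ?Y ?Z) \<cdot> R u) \<cdot> R (p0 ?X ?Z) \<oplus> pair ?q (y \<cdot> p1 ?Y ?Z) \<cdot> R (p1 ?X ?Z)"
    using a tyt pair_R_pair[of ?q y "p0 ?X ?Z \<cdot> u" "p1 ?X ?Z"] pair_R_comp[of ?q "y \<cdot> p0 ?Y ?Z" "p0 ?X ?Z" u]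
    unfolding y_def by (simp add: typing pair_comp_p0 rst_zer Id_comp)
  have L4: "y \<cdot> p1 ?Y ?Z = e \<cdot> pair (p \<cdot> u) (pair p v \<cdot> D u) \<cdot> D G"
    using a tyt pair_D[of G "p \<cdot> u" ?t1] pair_D[of u p v] unfolding y_def t_def e_def
    by (simp add: typing comp_assoc pair_rst_right)
  have tyy: "arr y" "dom y = ?T" "cod y = Pr ?Y ?Z" using a tyt unfolding y_def by (simp_all add: typing)
  let ?Y1 = "pair p (y \<cdot> p0 ?Y ?Z) \<cdot> R u" and ?M = "e \<cdot> pair (p \<cdot> u) (pair p v \<cdot> D u) \<cdot> D G"
  let ?S1 = "pair ?q (t \<cdot> p0 ?X ?Y) \<cdot> R (p0 ?X ?Z)"
    and ?S2 = "pair ?q ?Y1 \<cdot> R (p0 ?X ?Z)" and ?S3 = "pair ?q ?M \<cdot> R (p1 ?X ?Z)"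
  have tyY1: "arr ?Y1" "dom ?Y1 = ?T" "cod ?Y1 = ?X" using a tyy by (simp_all add: typing)
  have tyM: "arr ?M" "dom ?M = ?T" "cod ?M = ?Z" using a unfolding e_def by (simp_all add: typing)
  have "pair p v \<cdot> D (u \<cdot> G) = (?S1 \<oplus> (?S2 \<oplus> ?S3)) \<cdot> p1 ?X ?Z" unfolding L1 L2 L3 L4 ..
  also have "\<dots> = ?S1 \<cdot> p1 ?X ?Z \<oplus> (?S2 \<cdot> p1 ?X ?Z \<oplus> ?S3 \<cdot> p1 ?X ?Z)"
    using a tyt tyY1 tyM by (simp add: oplus_comp_p1 typing)
  also have "?S1 \<cdot> p1 ?X ?Z = rst p \<cdot> rst t \<cdot> zer ?T ?Z"
    using a tyt pair_R_p0_comp_p1[of ?q "t \<cdot> p0 ?X ?Y" ?X ?Z] by (simp add: typing rq rst_comp_p0)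
  also have "?S2 \<cdot> p1 ?X ?Z = rst p \<cdot> rst ?Y1 \<cdot> zer ?T ?Z"
    using a tyY1 pair_R_p0_comp_p1[of ?q ?Y1 ?X ?Z] by (simp add: typing rq)
  also have "?S3 \<cdot> p1 ?X ?Z = rst p \<cdot> ?M"
    using a tyM pair_R_p1_comp_p1[of ?q ?M ?X ?Z] by (simp add: typing rq)
  finally show ?thesis .
qed

lemma pair_D_comp:
  assumes u: "arr u" and G: "arr G" "cod u = dom G" and p: "arr p" "cod p = dom u"
    and v: "arr v" "dom v = dom p" "cod v = dom u"
  shows "pair p v \<cdot> D (u \<cdot> G) = pair (p \<cdot> u) (pair p v \<cdot> D u) \<cdot> D G"
proof -
  let ?X = "dom u" and ?Y = "cod u" and ?Z = "cod G" and ?T = "dom p"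
  define e where "e = rst (p \<cdot> u \<cdot> G)"
  define t where "t = e \<cdot> pair (pair p (zer ?T ?Y)) v \<cdot> R (R u)"
  define y where "y = pair (pair (p \<cdot> u) (zer ?T ?Z)) (t \<cdot> p1 ?X ?Y) \<cdot> R (R G)"
  let ?Y1 = "pair p (y \<cdot> p0 ?Y ?Z) \<cdot> R u"
  let ?M = "pair (p \<cdot> u) (pair p v \<cdot> D u) \<cdot> D G"
  note a = u G p v
  have tyt: "arr t" "dom t = ?T" "cod t = Pr ?X ?Y" using a unfolding t_def e_def by (simp_all add: typing)
  have tyy: "arr y" "dom y = ?T" "cod y = Pr ?Y ?Z" using a tyt unfolding y_def by (simp_all add: typing)
  have tyY1: "arr ?Y1" "dom ?Y1 = ?T" "cod ?Y1 = ?X" using a tyy by (simp_all add: typing)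
  have tyM: "arr ?M" "dom ?M = ?T" "cod ?M = ?Z" using a by (simp_all add: typing)
  have le_uG: "rst_le ?M (p \<cdot> u \<cdot> G)"
    by (rule rst_le_pair_D_left1) (use a in \<open>simp_all add: typing comp_assoc rst_le_refl\<close>)
  have le_v: "rst_le ?M v"
    by (rule rst_le_pair_D_left2, use a in \<open>simp_all add: typing\<close>,
        rule rst_le_pair_D_left2, use a in \<open>simp_all add: typing rst_le_refl\<close>)
  have le_u: "rst_le ?M (p \<cdot> u)"
  proof (rule rst_le_trans[OF _ _ _ _ _ le_uG])
    show "rst_le (p \<cdot> u \<cdot> G) (p \<cdot> u)"
      by (rule rst_le_comp_mono) (use a in \<open>simp_all add: typing rst_le_comp\<close>)
  qed (use a in \<open>simp_all add: typing\<close>)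
  have le_p: "rst_le ?M p"
    by (rule rst_le_trans[OF _ _ _ _ _ le_u]) (use a in \<open>simp_all add: typing rst_le_comp\<close>)
  have le_t: "rst_le ?M t"
  proof -
    have "rst_le ?M (pair p (zer ?T ?Y) \<cdot> R u)"
      by (rule rst_le_pair_R_right) (use a le_u in \<open>simp_all add: typing rst_le_zer\<close>)
    then have "rst_le ?M (pair (pair p (zer ?T ?Y)) v \<cdot> R (R u))"
      by (rule rst_le_pair_R_right[rotated 8]) (use a le_v in \<open>simp_all add: typing\<close>)
    then show ?thesis unfolding t_def e_def
      by (rule rst_le_rst_comp_right[rotated 6]) (use a le_uG in \<open>simp_all add: typing\<close>)
  qed
  have le_y: "rst_le ?M y"
  proof -
    have "rst_le ?M (pair (p \<cdot> u) (zer ?T ?Z) \<cdot> R G)"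
      by (rule rst_le_pair_R_right) (use a le_uG in \<open>simp_all add: typing rst_le_zer comp_assoc\<close>)
    moreover have "rst_le ?M (t \<cdot> p1 ?X ?Y)"
      by (rule rst_le_comp_p1_right) (use a le_t tyt in \<open>simp_all add: typing\<close>)
    ultimately show ?thesis unfolding y_def
      by (rule rst_le_pair_R_right[rotated 8]) (use a tyt in \<open>simp_all add: typing\<close>)
  qed
  have le_Y1: "rst_le ?M ?Y1"
  proof -
    have "rst_le ?M (y \<cdot> p0 ?Y ?Z)"
      by (rule rst_le_comp_p0_right) (use a le_y tyy in \<open>simp_all add: typing\<close>)
    then show ?thesis
      by (rule rst_le_pair_R_right[rotated 9]) (use a le_u tyy in \<open>simp_all add: typing\<close>)
  qed
  have "e \<cdot> ?M = ?M" unfolding e_def by (rule rst_le_absorb) (use a le_uG in \<open>simp_all add: typing\<close>)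
  moreover have "rst p \<cdot> ?M = ?M" by (rule rst_le_absorb) (use a le_p in \<open>simp_all add: typing\<close>)
  ultimately have "rst p \<cdot> e \<cdot> ?M = ?M" by simp
  moreover have "rst p \<cdot> rst ?Y1 \<cdot> zer ?T ?Z \<oplus> ?M = ?M"
    using rst_rst_zer_oplus[of p ?Y1 ?M] a tyM tyY1 le_p le_Y1 by simp
  moreover have "rst p \<cdot> rst t \<cdot> zer ?T ?Z \<oplus> ?M = ?M"
    using rst_rst_zer_oplus[of p t ?M] a tyM tyt le_p le_t by simp
  ultimately show ?thesis
    using pair_D_comp_expand[OF a] unfolding e_def[symmetric] t_def[symmetric] y_def[symmetric] by simp
qed

lemma oplus_rst_zer: assumes "arr a" "arr M" "dom a = dom M" "rst_le M a"
  shows "M \<oplus> rst a \<cdot> zer (dom M) (cod M) = M"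
  using rst_zer_oplus[OF assms] oplus_commute[of M "rst a \<cdot> zer (dom M) (cod M)"] assms by (simp add: typing)

lemma pair_oplus: assumes "arr a" "arr b" "arr c" "arr d" "dom b = dom a" "dom c = dom a" "dom d = dom a"
  "cod c = cod a" "cod d = cod b"
  shows "pair a b \<oplus> pair c d = pair (a \<oplus> c) (b \<oplus> d)"
proof (rule pair_unique[of _ _ "cod a" "cod b"])
  show "(pair a b \<oplus> pair c d) \<cdot> p0 (cod a) (cod b) = rst (b \<oplus> d) \<cdot> (a \<oplus> c)"
  proof -
    have "(pair a b \<oplus> pair c d) \<cdot> p0 (cod a) (cod b) = rst b \<cdot> a \<oplus> rst d \<cdot> c"
      using assms by (simp add: oplus_comp_p0 typing pair_comp_p0)
    also have "\<dots> = rst (rst b \<cdot> a \<oplus> rst d \<cdot> c) \<cdot> (rst b \<cdot> a \<oplus> rst d \<cdot> c)" using assms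
      by (simp add: rst_comp_self typing)
    also have "\<dots> = rst (b \<oplus> d) \<cdot> (rst (a \<oplus> c) \<cdot> (rst b \<cdot> a \<oplus> rst d \<cdot> c))"
      using assms by (simp add: rst_oplus typing rst_rst_comp rst_absorb_simps)
    also have "rst (a \<oplus> c) \<cdot> (rst b \<cdot> a \<oplus> rst d \<cdot> c) = rst c \<cdot> rst b \<cdot> a \<oplus> rst a \<cdot> rst d \<cdot> c"
      using assms by (simp add: rst_oplus typing comp_oplus rst_absorb_simps)
    also have "rst (b \<oplus> d) \<cdot> (rst c \<cdot> rst b \<cdot> a \<oplus> rst a \<cdot> rst d \<cdot> c) = rst (b \<oplus> d) \<cdot> (rst c \<cdot> a \<oplus> rst a \<cdot> c)"
      using assms by (simp add: rst_oplus typing comp_oplus rst_absorb_simps)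
    also have "rst c \<cdot> a \<oplus> rst a \<cdot> c = rst (a \<oplus> c) \<cdot> (a \<oplus> c)"
      using assms by (simp add: rst_oplus typing comp_oplus rst_absorb_simps)
    also have "\<dots> = a \<oplus> c" using assms by (simp add: rst_comp_self typing)
    finally show ?thesis .
  qed
  show "(pair a b \<oplus> pair c d) \<cdot> p1 (cod a) (cod b) = rst (a \<oplus> c) \<cdot> (b \<oplus> d)"
  proof -
    have "(pair a b \<oplus> pair c d) \<cdot> p1 (cod a) (cod b) = rst a \<cdot> b \<oplus> rst c \<cdot> d"
      using assms by (simp add: oplus_comp_p1 typing pair_comp_p1)
    also have "\<dots> = rst (rst a \<cdot> b \<oplus> rst c \<cdot> d) \<cdot> (rst a \<cdot> b \<oplus> rst c \<cdot> d)" using assms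
      by (simp add: rst_comp_self typing)
    also have "\<dots> = rst (a \<oplus> c) \<cdot> (rst (b \<oplus> d) \<cdot> (rst a \<cdot> b \<oplus> rst c \<cdot> d))"
      using assms by (simp add: rst_oplus typing rst_rst_comp rst_absorb_simps)
    also have "rst (b \<oplus> d) \<cdot> (rst a \<cdot> b \<oplus> rst c \<cdot> d) = rst d \<cdot> rst a \<cdot> b \<oplus> rst b \<cdot> rst c \<cdot> d"
      using assms by (simp add: rst_oplus typing comp_oplus rst_absorb_simps)
    also have "rst (a \<oplus> c) \<cdot> (rst d \<cdot> rst a \<cdot> b \<oplus> rst b \<cdot> rst c \<cdot> d) = rst (a \<oplus> c) \<cdot> (rst d \<cdot> b \<oplus> rst b \<cdot> d)"
      using assms by (simp add: rst_oplus typing comp_oplus rst_absorb_simps)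
    also have "rst d \<cdot> b \<oplus> rst b \<cdot> d = rst (b \<oplus> d) \<cdot> (b \<oplus> d)"
      using assms by (simp add: rst_oplus typing comp_oplus rst_absorb_simps)
    also have "\<dots> = b \<oplus> d" using assms by (simp add: rst_comp_self typing)
    finally show ?thesis .
  qed
qed (use assms in \<open>simp_all add: typing\<close>)

lemma pair_comp_zer: assumes "arr a" "arr b" "dom b = dom a" "cod a = A1" "cod b = B1"
  shows "pair a b \<cdot> zer (Pr A1 B1) B = rst a \<cdot> rst b \<cdot> zer (dom a) B"
  using assms comp_zer[of "pair a b" "Pr A1 B1" B] by (simp add: typing rst_pair comp_assoc)

lemma pair_R_iota0: assumes "arr x" "arr y" "dom y = dom x" "cod x = A" "cod y = Pr A B"
  shows "pair x y \<cdot> R (iota0 C A B) = rst x \<cdot> y \<cdot> p0 A B"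
proof -
  have "pair x y \<cdot> R (iota0 C A B) = pair x (y \<cdot> p0 A B) \<cdot> R (Id A) \<oplus> pair x (y \<cdot> p1 A B) \<cdot> R (zer A B)"
    unfolding iota0_def using assms pair_R_pair[of x y "Id A" "zer A B"] by (simp add: typing)
  also have "\<dots> = rst x \<cdot> y \<cdot> p0 A B \<oplus> rst (rst x \<cdot> y) \<cdot> zer (dom x) A"
    using assms by (simp add: pair_R_Id RD1_zero pair_comp_zer typing rst_comp_p1 rst_rst_comp comp_assoc)
  also have "\<dots> = rst x \<cdot> y \<cdot> p0 A B"
    using oplus_rst_zer[of "rst x \<cdot> y" "rst x \<cdot> y \<cdot> p0 A B"] assms
    by (simp add: typing rst_le_def rst_absorb_simps rst_comp_p0)
  finally show ?thesis .
qed

lemma pair_R_iota1: assumes "arr x" "arr y" "dom y = dom x" "cod x = B" "cod y = Pr A B"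
  shows "pair x y \<cdot> R (iota1 C A B) = rst x \<cdot> y \<cdot> p1 A B"
proof -
  have "pair x y \<cdot> R (iota1 C A B) = pair x (y \<cdot> p0 A B) \<cdot> R (zer B A) \<oplus> pair x (y \<cdot> p1 A B) \<cdot> R (Id B)"
    unfolding iota1_def using assms pair_R_pair[of x y "zer B A" "Id B"] by (simp add: typing)
  also have "\<dots> = rst (rst x \<cdot> y) \<cdot> zer (dom x) B \<oplus> rst x \<cdot> y \<cdot> p1 A B"
    using assms by (simp add: pair_R_Id RD1_zero pair_comp_zer typing rst_comp_p0 rst_rst_comp comp_assoc)
  also have "\<dots> = rst x \<cdot> y \<cdot> p1 A B"
    using rst_zer_oplus[of "rst x \<cdot> y" "rst x \<cdot> y \<cdot> p1 A B"] assms
    by (simp add: typing rst_le_def rst_absorb_simps rst_comp_p1)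
  finally show ?thesis .
qed

lemma pair_D_p0: assumes "arr p" "arr v" "dom v = dom p" "cod p = Pr A B" "cod v = Pr A B"
  shows "pair p v \<cdot> D (p0 A B) = rst p \<cdot> v \<cdot> p0 A B"
proof -
  let ?T = "dom p"
  let ?q = "pair p (zer ?T A)"
  have "pair p v \<cdot> D (p0 A B) = pair ?q v \<cdot> R (p1 (Pr A B) A \<cdot> iota0 C A B) \<cdot> p1 (Pr A B) A"
    using assms by (simp add: pair_D typing RD3_p0)
  also have "\<dots> = pair ?q (pair (?q \<cdot> p1 (Pr A B) A) v \<cdot> R (iota0 C A B)) \<cdot> R (p1 (Pr A B) A) \<cdot> p1 (Pr A B) A"
    using assms pair_R_comp[of ?q v "p1 (Pr A B) A" "iota0 C A B"] by (simp add: typing comp_assoc[symmetric])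
  also have "pair (?q \<cdot> p1 (Pr A B) A) v \<cdot> R (iota0 C A B) = rst p \<cdot> v \<cdot> p0 A B"
    using assms by (simp add: pair_comp_p1 typing pair_R_iota0 rst_rst_comp rst_zer comp_Id)
  also have "pair ?q (rst p \<cdot> v \<cdot> p0 A B) \<cdot> R (p1 (Pr A B) A) \<cdot> p1 (Pr A B) A
     = rst p \<cdot> rst p \<cdot> v \<cdot> p0 A B"
    using assms pair_R_p1_comp_p1[of ?q "rst p \<cdot> v \<cdot> p0 A B" "Pr A B" A]
    by (simp add: typing comp_assoc rst_pair rst_zer comp_Id)
  finally show ?thesis using assms by (simp add: rst_absorb_simps)
qed

lemma pair_D_p1: assumes "arr p" "arr v" "dom v = dom p" "cod p = Pr A B" "cod v = Pr A B"
  shows "pair p v \<cdot> D (p1 A B) = rst p \<cdot> v \<cdot> p1 A B"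
proof -
  let ?T = "dom p"
  let ?q = "pair p (zer ?T B)"
  have "pair p v \<cdot> D (p1 A B) = pair ?q v \<cdot> R (p1 (Pr A B) B \<cdot> iota1 C A B) \<cdot> p1 (Pr A B) B"
    using assms by (simp add: pair_D typing RD3_p1)
  also have "\<dots> = pair ?q (pair (?q \<cdot> p1 (Pr A B) B) v \<cdot> R (iota1 C A B)) \<cdot> R (p1 (Pr A B) B) \<cdot> p1 (Pr A B) B"
    using assms pair_R_comp[of ?q v "p1 (Pr A B) B" "iota1 C A B"] by (simp add: typing comp_assoc[symmetric])
  also have "pair (?q \<cdot> p1 (Pr A B) B) v \<cdot> R (iota1 C A B) = rst p \<cdot> v \<cdot> p1 A B"
    using assms by (simp add: pair_comp_p1 typing pair_R_iota1 rst_rst_comp rst_zer comp_Id)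
  also have "pair ?q (rst p \<cdot> v \<cdot> p1 A B) \<cdot> R (p1 (Pr A B) B) \<cdot> p1 (Pr A B) B
     = rst p \<cdot> rst p \<cdot> v \<cdot> p1 A B"
    using assms pair_R_p1_comp_p1[of ?q "rst p \<cdot> v \<cdot> p1 A B" "Pr A B" B]
    by (simp add: typing comp_assoc rst_pair rst_zer comp_Id)
  finally show ?thesis using assms by (simp add: rst_absorb_simps)
qed

lemma pair_D_p1_comp:
  assumes "arr p" "arr v" "dom v = dom p" "cod p = Pr A (Pr B B')" "cod v = Pr A (Pr B B')"
    and k: "k = p0 B B' \<or> k = p1 B B'"
  shows "pair p v \<cdot> D (p1 A (Pr B B') \<cdot> k) = rst p \<cdot> v \<cdot> p1 A (Pr B B') \<cdot> k"
proof -
  have tk: "arr k" "dom k = Pr B B'" "rst k = Id (Pr B B')" using k by (auto simp: typing rst_p0 rst_p1)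
  have "pair p v \<cdot> D (p1 A (Pr B B') \<cdot> k) = pair (p \<cdot> p1 A (Pr B B')) (rst p \<cdot> v \<cdot> p1 A (Pr B B')) \<cdot> D k"
    using assms tk pair_D_comp[of "p1 A (Pr B B')" k p v] pair_D_p1[of p v A "Pr B B'"] by (simp add: typing)
  also have "\<dots> = rst p \<cdot> v \<cdot> p1 A (Pr B B') \<cdot> k"
    using k assms pair_D_p0[of "p \<cdot> p1 A (Pr B B')" "rst p \<cdot> v \<cdot> p1 A (Pr B B')" B B']
      pair_D_p1[of "p \<cdot> p1 A (Pr B B')" "rst p \<cdot> v \<cdot> p1 A (Pr B B')" B B']
    by (auto simp: typing rst_comp_p1 rst_idem_comp comp_assoc)
  finally show ?thesis .
qed

lemma D_oplus: assumes "arr G" "arr G'" "dom G' = dom G" "cod G' = cod G"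
  shows "D (G \<oplus> G') = D G \<oplus> D G'"
proof -
  have "D (G \<oplus> G') = cross (iota0 C (dom G) (cod G)) (Id (dom G)) \<cdot> (R (R G) \<oplus> R (R G')) \<cdot> p1 (dom G) (cod G)"
    using assms by (simp add: D_unfold typing RD1_add)
  also have "(R (R G) \<oplus> R (R G')) \<cdot> p1 (dom G) (cod G) = R (R G) \<cdot> p1 (dom G) (cod G) \<oplus> R (R G') \<cdot> p1 (dom G) (cod G)"
    using assms by (simp add: oplus_comp_p1 typing)
  also have "cross (iota0 C (dom G) (cod G)) (Id (dom G)) \<cdot> (R (R G) \<cdot> p1 (dom G) (cod G) \<oplus> R (R G') \<cdot> p1 (dom G) (cod G)) = D G \<oplus> D G'"
    using assms by (simp add: comp_oplus typing D_unfold)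
  finally show ?thesis .
qed

lemma pair_R_cross_p1:
  assumes h: "arr h" "rst h = Id (dom h)" and k: "arr k" and q: "arr q" "cod q = Pr (dom h) (dom k)"
    and s: "arr s" "dom s = dom q" "cod s = Pr (cod h) (cod k)"
  shows "pair q s \<cdot> R (cross h k) \<cdot> p1 (dom h) (dom k) = pair (q \<cdot> p1 (dom h) (dom k)) (s \<cdot> p1 (cod h) (cod k)) \<cdot> R k"
proof -
  let ?H = "dom h" and ?K = "dom k" and ?H' = "cod h" and ?K' = "cod k" and ?T = "dom q"
  let ?W0 = "pair (q \<cdot> p0 ?H ?K) (s \<cdot> p0 ?H' ?K') \<cdot> R h"
  let ?W1 = "pair (q \<cdot> p1 ?H ?K) (s \<cdot> p1 ?H' ?K') \<cdot> R k"
  note a = h k q s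
  have tW0: "arr ?W0" "dom ?W0 = ?T" "cod ?W0 = ?H" using a by (simp_all add: typing)
  have tW1: "arr ?W1" "dom ?W1 = ?T" "cod ?W1 = ?K" using a by (simp_all add: typing)
  have sum: "pair q s \<cdot> R (cross h k) = pair q ?W0 \<cdot> R (p0 ?H ?K) \<oplus> pair q ?W1 \<cdot> R (p1 ?H ?K)"
    unfolding cross_unfold
    using a pair_R_pair[of q s "p0 ?H ?K \<cdot> h" "p1 ?H ?K \<cdot> k"]
      pair_R_comp[of q "s \<cdot> p0 ?H' ?K'" "p0 ?H ?K" h] pair_R_comp[of q "s \<cdot> p1 ?H' ?K'" "p1 ?H ?K" k]
    by (simp add: typing)
  have "pair q s \<cdot> R (cross h k) \<cdot> p1 ?H ?K = (pair q s \<cdot> R (cross h k)) \<cdot> p1 ?H ?K"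
    using a by (simp add: comp_assoc typing)
  also have "\<dots> = rst q \<cdot> rst ?W0 \<cdot> zer ?T ?K \<oplus> rst q \<cdot> ?W1"
    unfolding sum using a tW0 tW1 by (simp add: oplus_comp_p1 typing pair_R_p0_comp_p1 pair_R_p1_comp_p1)
  also have "\<dots> = rst q \<cdot> ?W1"
  proof -
    have "rst (p0 ?H ?K \<cdot> h) = Id (Pr ?H ?K)" using a by (simp add: rst_comp_total typing rst_p0)
    then have rW0: "rst ?W0 = rst q \<cdot> rst s"
      using a by (simp add: rst_pair_R typing rst_comp_total rst_comp_p0 rst_Id)
    have lq: "rst_le (rst q \<cdot> ?W1) q" by (rule rst_le_rst_comp) (use a tW1 in \<open>simp_all add: typing\<close>)
    have ls: "rst_le (rst q \<cdot> ?W1) s"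
      by (rule rst_le_rst_comp_left, use a tW1 in \<open>simp_all add: typing\<close>,
          rule rst_le_pair_R_left2, use a in \<open>simp_all add: typing rst_le_comp\<close>)
    have lW0: "rst_le (rst q \<cdot> ?W1) ?W0"
      by (rule rst_le_meet_right[of _ _ q s]) (use a tW0 tW1 rW0 lq ls in \<open>simp_all add: typing\<close>)
    have tM: "arr (rst q \<cdot> ?W1)" "dom (rst q \<cdot> ?W1) = ?T" "cod (rst q \<cdot> ?W1) = ?K"
      using a tW1 by (simp_all add: typing)
    have "rst q \<cdot> rst ?W0 \<cdot> zer (dom (rst q \<cdot> ?W1)) (cod (rst q \<cdot> ?W1)) \<oplus> rst q \<cdot> ?W1 = rst q \<cdot> ?W1"
      by (rule rst_rst_zer_oplus[OF a(4) tW0(1) tM(1) _ _ lq lW0]) (use a tW0 tM in simp_all)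
    then show ?thesis unfolding tM .
  qed
  also have "rst q \<cdot> ?W1 = ?W1"
  proof (rule rst_le_absorb[OF a(4) tW1(1)])
    show "dom q = dom ?W1" using tW1 by simp
    show "rst_le ?W1 q"
      by (rule rst_le_pair_R_left1, use a in \<open>simp_all add: typing\<close>,
          rule rst_le_comp_left, use a in \<open>simp_all add: typing rst_le_comp\<close>)
  qed
  finally show ?thesis .
qed

lemma pair_R_cross_R_p1:
  assumes u: "arr u" "dom u = X" and p: "arr p" "cod p = X" and w: "arr w" "dom w = dom p" "cod w = X"
    and k: "arr k" "rst k = Id (Pr U V)" "dom k = Pr U V" "cod k = cod u"
    and q: "arr q" "dom q = dom p" "cod q = Pr X (Pr U V)"
    and hq: "q \<cdot> cross (Id X) k = pair p (zer (dom p) (cod u))"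
  shows "pair q w \<cdot> R (cross (Id X) k \<cdot> R u) \<cdot> p1 X (Pr U V)
       = pair (q \<cdot> p1 X (Pr U V)) (pair p w \<cdot> D u) \<cdot> R k"
proof -
  let ?h = "cross (Id X) k"
  let ?S = "pair (pair p (zer (dom p) (cod u))) w \<cdot> R (R u)"
  have tS: "arr ?S" "dom ?S = dom p" "cod ?S = Pr X (cod u)" using u p w by (simp_all add: typing)
  have th: "arr ?h" "dom ?h = Pr X (Pr U V)" "cod ?h = Pr X (cod u)" using u k by (simp_all add: typing)
  have "pair q w \<cdot> R (?h \<cdot> R u) = pair q (pair (q \<cdot> ?h) w \<cdot> R (R u)) \<cdot> R ?h"
    by (rule pair_R_comp) (use u p w q th in \<open>simp_all add: typing\<close>)
  also have "pair (q \<cdot> ?h) w \<cdot> R (R u) = ?S" using hq by simp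
  finally have 1: "pair q w \<cdot> R (?h \<cdot> R u) = pair q ?S \<cdot> R ?h" .
  have "pair q w \<cdot> R (?h \<cdot> R u) \<cdot> p1 X (Pr U V) = (pair q w \<cdot> R (?h \<cdot> R u)) \<cdot> p1 X (Pr U V)"
    using u p w q th by (simp add: comp_assoc typing)
  also have "\<dots> = (pair q ?S \<cdot> R ?h) \<cdot> p1 X (Pr U V)" unfolding 1 ..
  also have "\<dots> = pair q ?S \<cdot> R ?h \<cdot> p1 X (Pr U V)" using u p w q th tS by (simp add: comp_assoc typing)
  also have "\<dots> = pair (q \<cdot> p1 X (Pr U V)) (?S \<cdot> p1 X (cod u)) \<cdot> R k"
    using pair_R_cross_p1[of "Id X" k q ?S] u k q tS by (simp add: typing rst_Id)
  also have "?S \<cdot> p1 X (cod u) = pair p w \<cdot> D u"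
    using u p w by (simp add: pair_D typing comp_assoc)
  finally show ?thesis .
qed

lemma pair_D_pair:
  assumes u: "arr u" and v: "arr v" "dom v = dom u" and p: "arr p" "cod p = dom u" and w: "arr w" "dom w = dom p" "cod w = dom u"
  shows "pair p w \<cdot> D (pair u v) = pair (pair p w \<cdot> D u) (pair p w \<cdot> D v)"
proof -
  let ?X = "dom u" and ?U = "cod u" and ?V = "cod v" and ?T = "dom p"
  let ?q = "pair p (zer ?T (Pr ?U ?V))"
  let ?a = "cross (Id ?X) (p0 ?U ?V) \<cdot> R u" and ?b = "cross (Id ?X) (p1 ?U ?V) \<cdot> R v"
  note a = u v p w
  have ta: "arr ?a" "dom ?a = Pr ?X (Pr ?U ?V)" "cod ?a = ?X" using a by (simp_all add: typing)
  have tb: "arr ?b" "dom ?b = Pr ?X (Pr ?U ?V)" "cod ?b = ?X" using a by (simp_all add: typing)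
  have tq: "arr ?q" "dom ?q = ?T" "cod ?q = Pr ?X (Pr ?U ?V)" using a by (simp_all add: typing)
  have "pair p w \<cdot> D (pair u v) = pair ?q w \<cdot> R (R (pair u v)) \<cdot> p1 ?X (Pr ?U ?V)"
    using a by (simp add: pair_D typing)
  also have "R (R (pair u v)) = R ?a \<oplus> R ?b" using a ta tb by (simp add: RD4 RD1_add)
  also have "pair ?q w \<cdot> (R ?a \<oplus> R ?b) \<cdot> p1 ?X (Pr ?U ?V) = pair ?q w \<cdot> R ?a \<cdot> p1 ?X (Pr ?U ?V) \<oplus> pair ?q w \<cdot> R ?b \<cdot> p1 ?X (Pr ?U ?V)"
    using a ta tb tq by (simp add: oplus_comp_p1 comp_oplus typing)
  also have "pair ?q w \<cdot> R ?a \<cdot> p1 ?X (Pr ?U ?V) = pair (?q \<cdot> p1 ?X (Pr ?U ?V)) (pair p w \<cdot> D u) \<cdot> R (p0 ?U ?V)"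
  proof (rule pair_R_cross_R_p1)
    show "?q \<cdot> cross (Id ?X) (p0 ?U ?V) = pair p (zer (dom p) (cod u))"
      using a tq by (simp add: pair_comp_cross typing rst_Id rst_p0 comp_Id zer_comp_p0)
  qed (use a tq in \<open>simp_all add: typing rst_p0\<close>)
  also have "pair ?q w \<cdot> R ?b \<cdot> p1 ?X (Pr ?U ?V) = pair (?q \<cdot> p1 ?X (Pr ?U ?V)) (pair p w \<cdot> D v) \<cdot> R (p1 ?U ?V)"
  proof (rule pair_R_cross_R_p1[of v ?X])
    show "?q \<cdot> cross (Id ?X) (p1 ?U ?V) = pair p (zer (dom p) (cod v))"
      using a tq by (simp add: pair_comp_cross typing rst_Id rst_p1 comp_Id zer_comp_p1)
  qed (use a tq in \<open>simp_all add: typing rst_p1\<close>)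
  also have "?q \<cdot> p1 ?X (Pr ?U ?V) = rst p \<cdot> zer ?T (Pr ?U ?V)" using a by (simp add: pair_comp_p1 typing)
  also have "pair (rst p \<cdot> zer ?T (Pr ?U ?V)) (pair p w \<cdot> D u) \<cdot> R (p0 ?U ?V) = rst p \<cdot> pair (pair p w \<cdot> D u) (zer ?T ?V)"
    using a pair_R_p0[of "rst p \<cdot> zer ?T (Pr ?U ?V)" "pair p w \<cdot> D u" ?U ?V] by (simp add: typing rst_rst_comp rst_zer comp_Id)
  also have "pair (rst p \<cdot> zer ?T (Pr ?U ?V)) (pair p w \<cdot> D v) \<cdot> R (p1 ?U ?V) = rst p \<cdot> pair (zer ?T ?U) (pair p w \<cdot> D v)"
    using a pair_R_p1[of "rst p \<cdot> zer ?T (Pr ?U ?V)" "pair p w \<cdot> D v" ?U ?V] by (simp add: typing rst_rst_comp rst_zer comp_Id)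
  also have "rst p \<cdot> pair (pair p w \<cdot> D u) (zer ?T ?V) \<oplus> rst p \<cdot> pair (zer ?T ?U) (pair p w \<cdot> D v)
     = rst p \<cdot> (pair (pair p w \<cdot> D u) (zer ?T ?V) \<oplus> pair (zer ?T ?U) (pair p w \<cdot> D v))"
    using a by (simp add: comp_oplus typing)
  also have "pair (pair p w \<cdot> D u) (zer ?T ?V) \<oplus> pair (zer ?T ?U) (pair p w \<cdot> D v) = pair (pair p w \<cdot> D u \<oplus> zer ?T ?U) (zer ?T ?V \<oplus> pair p w \<cdot> D v)"
    using a by (simp add: pair_oplus typing)
  also have "pair p w \<cdot> D u \<oplus> zer ?T ?U = pair p w \<cdot> D u" using a by (simp add: oplus_zer typing)
  also have "zer ?T ?V \<oplus> pair p w \<cdot> D v = pair p w \<cdot> D v"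
    using a oplus_commute[of "zer ?T ?V" "pair p w \<cdot> D v"] by (simp add: oplus_zer typing)
  also have "rst p \<cdot> pair (pair p w \<cdot> D u) (pair p w \<cdot> D v) = pair (pair p w \<cdot> D u) (pair p w \<cdot> D v)"
  proof (rule rst_le_absorb)
    show "rst_le (pair (pair p w \<cdot> D u) (pair p w \<cdot> D v)) p"
      by (rule rst_le_pair_left1, use a in \<open>simp_all add: typing\<close>, rule rst_le_pair_D_left1, use a in \<open>simp_all add: typing\<close>, rule rst_le_comp, use a in simp_all)
  qed (use a in \<open>simp_all add: typing\<close>)
  finally show ?thesis .
qed

lemma pair_zer_D: assumes "arr g" "arr x" "cod x = dom g"
  shows "pair x (zer (dom x) (dom g)) \<cdot> D g = rst (x \<cdot> g) \<cdot> zer (dom x) (cod g)"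
proof -
  let ?T = "dom x" and ?X = "dom g" and ?Y = "cod g"
  let ?a = "pair x (zer ?T ?Y)"
  have "pair x (zer ?T ?X) \<cdot> D g = (pair ?a (zer ?T ?X) \<cdot> R (R g)) \<cdot> p1 ?X ?Y"
    using assms by (simp add: pair_D typing comp_assoc)
  also have "pair ?a (zer ?T ?X) \<cdot> R (R g) = rst (?a \<cdot> R g) \<cdot> zer ?T (Pr ?X ?Y)"
    using assms RD2_zero[of ?a "R g"] by (simp add: typing)
  also have "rst (?a \<cdot> R g) = rst (x \<cdot> g)" using assms by (simp add: rst_pair_R typing rst_zer comp_Id)
  also have "(rst (x \<cdot> g) \<cdot> zer ?T (Pr ?X ?Y)) \<cdot> p1 ?X ?Y = rst (x \<cdot> g) \<cdot> zer ?T ?Y"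
    using assms by (simp add: comp_assoc typing zer_comp_p1)
  finally show ?thesis .
qed

lemma pair_zer_zer: "pair (zer T A) (zer T B) = zer T (Pr A B)"
  by (rule pair_unique[of "zer T A" "zer T B" A B, symmetric]) (simp_all add: typing zer_comp_p0 zer_comp_p1 rst_zer Id_comp)

section \<open>Axiom RD.6 and the dagger of D\<close>

lemma pair_R_R_comp_p1:
  assumes g: "arr g" "dom g = Pr X Y" and y: "arr y" "cod y = Pr (Pr X Y) (cod g)"
    and c: "arr c" "dom c = dom y" "cod c = Y"
  shows "pair y c \<cdot> R (R g \<cdot> p1 X Y) = rst (y \<cdot> R g) \<cdot> pair y (pair (zer (dom y) X) c) \<cdot> R (R g)"
proof -
  have "pair y c \<cdot> R (R g \<cdot> p1 X Y) = pair y (pair (y \<cdot> R g) c \<cdot> R (p1 X Y)) \<cdot> R (R g)"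
    by (rule pair_R_comp) (use assms in \<open>simp_all add: typing\<close>)
  also have "pair (y \<cdot> R g) c \<cdot> R (p1 X Y) = rst (y \<cdot> R g) \<cdot> pair (zer (dom y) X) c"
    using assms pair_R_p1[of "y \<cdot> R g" c X Y] by (simp add: typing)
  finally show ?thesis using assms by (simp add: pair_rst_right typing comp_assoc)
qed

lemma dagger_D:
  assumes f: "arr f"
  defines "A \<equiv> dom f" and "B \<equiv> cod f"
  shows "dagger C A A (D f) = pair (pair (p0 A B) (zer (Pr A B) B)) (pair (zer (Pr A B) A) (p1 A B)) \<cdot> D (R f)"
proof -
  let ?F = "R f" and ?E = "Pr A B"
  let ?a = "p0 A B" and ?c = "p1 A B"
  let ?zA = "zer ?E A" and ?zB = "zer ?E B"
  let ?x = "pair ?a ?zA"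
  let ?h = "cross (iota0 C A B) (Id A)"
  let ?y = "pair (pair ?a ?zB) ?zA"
  let ?e = "rst (?y \<cdot> R ?F)"
  let ?Tm = "?e \<cdot> pair ?y (pair ?zA ?c) \<cdot> R (R ?F)"
  let ?M = "pair (pair ?a ?zB) (pair ?zA ?c) \<cdot> D ?F"
  have a: "arr f" "dom f = A" "cod f = B" unfolding A_def B_def using f by simp_all
  have tyTm: "arr ?Tm" "dom ?Tm = ?E" "cod ?Tm = Pr ?E A" using a by (simp_all add: typing)
  have tyM: "arr ?M" "dom ?M = ?E" using a by (simp_all add: typing)
  have "cross (iota0 C A A) (Id B) = pair ?x ?c"
    unfolding cross_unfold using a by (simp add: typing comp_iota0 comp_Id)
  then have "dagger C A A (D f) = (pair ?x ?c \<cdot> R (?h \<cdot> R ?F \<cdot> p1 A B)) \<cdot> p1 A A"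
    unfolding dagger_def using a by (simp add: typing D_unfold)
  also have "pair ?x ?c \<cdot> R (?h \<cdot> R ?F \<cdot> p1 A B) = pair ?x (pair (?x \<cdot> ?h) ?c \<cdot> R (R ?F \<cdot> p1 A B)) \<cdot> R ?h"
    by (rule pair_R_comp) (use a in \<open>simp_all add: typing\<close>)
  also have "?x \<cdot> ?h = ?y"
    using a by (simp add: pair_comp_cross typing rst_iota0 rst_Id comp_iota0 comp_Id)
  also have "pair ?y ?c \<cdot> R (R ?F \<cdot> p1 A B) = ?Tm"
    using a pair_R_R_comp_p1[of ?F A B ?y ?c] by (simp add: typing)
  also have "(pair ?x ?Tm \<cdot> R ?h) \<cdot> p1 A A = pair (?x \<cdot> p1 A A) (?Tm \<cdot> p1 ?E A) \<cdot> R (Id A)"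
    using pair_R_cross_p1[of "iota0 C A B" "Id A" ?x ?Tm] a tyTm by (simp add: typing rst_iota0 comp_assoc)
  also have "\<dots> = rst (?x \<cdot> p1 A A) \<cdot> ?Tm \<cdot> p1 ?E A"
    using a tyTm pair_R_Id[of "?x \<cdot> p1 A A" "?Tm \<cdot> p1 ?E A" A] by (simp add: typing)
  also have "rst (?x \<cdot> p1 A A) = Id ?E"
    using a by (simp add: pair_comp_p1 typing rst_pair rst_zer rst_rst_comp rst_p0 comp_Id Id_comp)
  also have "?Tm \<cdot> p1 ?E A = ?e \<cdot> ?M"
    using a pair_D[of ?F "pair ?a ?zB" "pair ?zA ?c"] by (simp add: typing comp_assoc)
  also have "Id ?E \<cdot> ?e \<cdot> ?M = ?M"
  proof -
    have "rst ?M = ?e" using a by (simp add: rst_pair_D rst_pair_R typing rst_pair rst_zer comp_Id rst_p0 rst_p1)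
    then have "?e \<cdot> ?M = ?M" using tyM rst_comp_self[of ?M] by simp
    then show ?thesis using tyM by (simp add: Id_comp typing)
  qed
  finally show ?thesis .
qed

lemma pair_D_coordinate_maps:
  fixes A B :: 'o
  defines "E \<equiv> Pr A (Pr B B)"
  defines "a \<equiv> p0 A (Pr B B)" and "b \<equiv> p1 A (Pr B B) \<cdot> p0 B B" and "c \<equiv> p1 A (Pr B B) \<cdot> p1 B B"
  defines "P \<equiv> pair a (pair b (zer E B))" and "V \<equiv> pair (zer E A) (pair (zer E B) c)"
  shows "P \<cdot> pair a (b \<oplus> c) = pair a b" (is ?g1)
    and "pair P V \<cdot> D (pair a (b \<oplus> c)) = pair (zer E A) c" (is ?g2)
    and "P \<cdot> pair a b = pair a b" (is ?g3)
    and "pair P V \<cdot> D (pair a b) = zer E (Pr A B)" (is ?g4)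
    and "P \<cdot> pair a c = pair a (zer E B)" (is ?g5)
    and "pair P V \<cdot> D (pair a c) = pair (zer E A) c" (is ?g6)
proof -
  note defs = E_def a_def b_def c_def P_def V_def
  have ty: "arr a" "dom a = E" "cod a = A" "arr b" "dom b = E" "cod b = B" "arr c" "dom c = E" "cod c = B"
    "arr P" "dom P = E" "cod P = E" "arr V" "dom V = E" "cod V = E"
    unfolding defs by (simp_all add: typing)
  have rb: "rst b = Id E" and rc: "rst c = Id E" unfolding defs by (simp_all add: rst_comp_p0 rst_comp_p1 rst_p1 typing)
  have rP: "rst P = Id E" using rb unfolding defs by (simp add: rst_pair typing rst_zer rst_p0 comp_Id)
  have Pp1: "P \<cdot> p1 A (Pr B B) = pair b (zer E B)" unfolding defs by (simp add: pair_comp_p1 typing rst_p0 Id_comp)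
  have Pa: "P \<cdot> a = a" using rb unfolding defs by (simp add: pair_comp_p0 typing rst_pair rst_zer comp_Id Id_comp)
  have Pb: "P \<cdot> b = b"
  proof -
    have "P \<cdot> b = (P \<cdot> p1 A (Pr B B)) \<cdot> p0 B B" using ty unfolding b_def E_def by (simp add: comp_assoc typing)
    also have "\<dots> = b" unfolding Pp1 using ty by (simp add: pair_comp_p0 rst_zer Id_comp typing)
    finally show ?thesis .
  qed
  have Pc: "P \<cdot> c = zer E B"
  proof -
    have "P \<cdot> c = (P \<cdot> p1 A (Pr B B)) \<cdot> p1 B B" using ty unfolding c_def E_def by (simp add: comp_assoc typing)
    also have "\<dots> = zer E B" unfolding Pp1 using ty rb by (simp add: pair_comp_p1 Id_comp typing)
    finally show ?thesis .
  qed
  have Vp1: "V \<cdot> p1 A (Pr B B) = pair (zer E B) c" unfolding defs by (simp add: pair_comp_p1 typing rst_zer Id_comp)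
  have Da: "pair P V \<cdot> D a = zer E A"
    using pair_D_p0[of P V A "Pr B B"] ty rP rc unfolding a_def V_def
    by (simp add: typing pair_comp_p0 Id_comp rst_pair rst_zer rst_comp_self)
  have Db: "pair P V \<cdot> D b = zer E B"
    using pair_D_p1_comp[of P V A B B "p0 B B"] ty rP Vp1 rc unfolding b_def
    by (simp add: typing Id_comp comp_assoc[symmetric] pair_comp_p0)
  have Dc: "pair P V \<cdot> D c = c"
    using pair_D_p1_comp[of P V A B B "p1 B B"] ty rP Vp1 unfolding c_def
    by (simp add: typing Id_comp comp_assoc[symmetric] pair_comp_p1 rst_zer)
  show ?g1
  proof -
    have "P \<cdot> pair a (b \<oplus> c) = pair a (b \<oplus> zer E B)" using ty Pa Pb Pc by (simp add: comp_pair comp_oplus typing)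
    then show ?thesis using ty by (simp add: oplus_zer)
  qed
  show ?g2
  proof -
    have "pair P V \<cdot> D (pair a (b \<oplus> c)) = pair (zer E A) (zer E B \<oplus> c)"
      using ty Da Db Dc by (simp add: pair_D_pair D_oplus typing comp_oplus)
    then show ?thesis using ty oplus_commute[of "zer E B" c] by (simp add: typing oplus_zer)
  qed
  show ?g3 using ty Pa Pb by (simp add: comp_pair)
  show ?g4 using ty Da Db by (simp add: pair_D_pair pair_zer_zer)
  show ?g5 using ty Pa Pc by (simp add: comp_pair)
  show ?g6 using ty Da Dc by (simp add: pair_D_pair)
qed

lemma pair_D_R_drop_base:
  assumes f: "arr f"
  defines "A \<equiv> dom f" and "B \<equiv> cod f"
  shows "pair (pair (p0 A (Pr B B)) (p1 A (Pr B B) \<cdot> p0 B B)) (pair (zer (Pr A (Pr B B)) A) (p1 A (Pr B B) \<cdot> p1 B B)) \<cdot> D (R f)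
       = pair (pair (p0 A (Pr B B)) (zer (Pr A (Pr B B)) B)) (pair (zer (Pr A (Pr B B)) A) (p1 A (Pr B B) \<cdot> p1 B B)) \<cdot> D (R f)"
proof -
  let ?F = "R f" and ?E = "Pr A (Pr B B)"
  let ?a = "p0 A (Pr B B)" and ?b = "p1 A (Pr B B) \<cdot> p0 B B" and ?c = "p1 A (Pr B B) \<cdot> p1 B B"
  let ?P = "pair ?a (pair ?b (zer ?E B))" and ?V = "pair (zer ?E A) (pair (zer ?E B) ?c)"
  let ?M = "pair (pair ?a (zer ?E B)) (pair (zer ?E A) ?c) \<cdot> D ?F"
  have a: "arr f" "dom f = A" "cod f = B" unfolding A_def B_def using f by simp_all
  note coords = pair_D_coordinate_maps[of A B]
  have chain: "pair ?P ?V \<cdot> D (g \<cdot> ?F) = pair (?P \<cdot> g) (pair ?P ?V \<cdot> D g) \<cdot> D ?F"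
    if "arr g" "dom g = ?E" "cod g = Pr A B" for g
    by (rule pair_D_comp) (use a that in \<open>simp_all add: typing\<close>)
  have "pair ?P ?V \<cdot> D (pair ?a (?b \<oplus> ?c) \<cdot> ?F) = pair (pair ?a ?b) (pair (zer ?E A) ?c) \<cdot> D ?F"
    using chain[of "pair ?a (?b \<oplus> ?c)"] coords by (simp add: typing)
  moreover have "pair ?P ?V \<cdot> D (pair ?a (?b \<oplus> ?c) \<cdot> ?F) =
      pair ?P ?V \<cdot> D (pair ?a ?b \<cdot> ?F) \<oplus> pair ?P ?V \<cdot> D (pair ?a ?c \<cdot> ?F)"
    using a RD2_add[of ?a f ?b ?c] by (simp add: D_oplus typing comp_oplus)
  moreover have "pair ?P ?V \<cdot> D (pair ?a ?b \<cdot> ?F) = rst (pair ?a ?b \<cdot> ?F) \<cdot> zer ?E A"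
    using chain[of "pair ?a ?b"] coords pair_zer_D[of ?F "pair ?a ?b"] a by (simp add: typing)
  moreover have "pair ?P ?V \<cdot> D (pair ?a ?c \<cdot> ?F) = ?M"
    using chain[of "pair ?a ?c"] coords by (simp add: typing)
  moreover have "rst (pair ?a ?b \<cdot> ?F) \<cdot> zer ?E A \<oplus> ?M = ?M"
  proof -
    have "rst ?M = rst (?a \<cdot> f)" and "rst (pair ?a ?b \<cdot> ?F) = rst (?a \<cdot> f)"
      using a by (simp_all add: rst_pair_D rst_pair_R typing rst_pair rst_zer rst_comp_p0 rst_comp_p1 rst_p1 comp_Id Id_comp)
    then have "rst_le ?M (pair ?a ?b \<cdot> ?F)" unfolding rst_le_def using a by (simp add: rst_idem typing)
    then show ?thesis using rst_zer_oplus[of "pair ?a ?b \<cdot> ?F" ?M] a by (simp add: typing)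
  qed
  ultimately show ?thesis by simp
qed

lemma cross_Id_p1_split_epi:
  "pair (p0 A B) (pair (zer (Pr A B) B) (p1 A B)) \<cdot> cross (Id A) (p1 B B) = Id (Pr A B)"
proof -
  let ?s = "pair (p0 A B) (pair (zer (Pr A B) B) (p1 A B))"
  let ?a0 = "p0 A (Pr B B)" and ?c1 = "p1 A (Pr B B) \<cdot> p1 B B"
  have "?s \<cdot> ?a0 = p0 A B" by (simp add: pair_comp_p0 typing rst_pair rst_zer rst_p1 Id_comp)
  moreover have "?s \<cdot> ?c1 = p1 A B"
    by (simp add: comp_assoc[symmetric] typing pair_comp_p1 rst_p0 Id_comp rst_zer)
  moreover have "cross (Id A) (p1 B B) = pair ?a0 ?c1" unfolding cross_unfold by (simp add: typing comp_Id)
  ultimately show ?thesis by (simp add: comp_pair typing pair_p0_p1)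
qed

lemma split_epi_comp_cancel:
  assumes split: "s \<cdot> e = Id X" and s: "arr s" "cod s = dom e" and e: "arr e"
    and x: "arr x" "dom x = cod e" and y: "arr y" "dom y = cod e"
    and eq: "e \<cdot> x = e \<cdot> y"
  shows "x = y"
proof -
  have X: "X = cod e" using split s e arr_comp cod_comp cod_Id by metis
  have "x = (s \<cdot> e) \<cdot> x" using split x X by (simp add: Id_comp)
  also have "\<dots> = s \<cdot> e \<cdot> y" using s e x eq by (simp add: comp_assoc)
  also have "\<dots> = (s \<cdot> e) \<cdot> y" using s e y by (simp add: comp_assoc)
  also have "\<dots> = y" using split y X by (simp add: Id_comp)
  finally show ?thesis .
qed

lemma RD6_iff_cross_p1_dagger_D:
  assumes f: "arr f"
  defines "A \<equiv> dom f" and "B \<equiv> cod f"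
  shows "RD6 C f \<longleftrightarrow>
    cross (Id A) (p1 B B) \<cdot> dagger C A A (D f) = cross (Id A) (p1 B B) \<cdot> R f"
proof -
  let ?E = "Pr A (Pr B B)"
  let ?a0 = "p0 A (Pr B B)" and ?P1 = "p1 A (Pr B B)"
  let ?b1 = "?P1 \<cdot> p0 B B" and ?c1 = "?P1 \<cdot> p1 B B"
  let ?zA = "zer ?E A" and ?zB = "zer ?E B"
  let ?L = "pair (cross (Id A) (p0 B B)) (cross (zer A A) (p1 B B))"
  let ?T1 = "cross (Id A) (p1 B B)"
  let ?N = "pair (pair (p0 A B) (zer (Pr A B) B)) (pair (zer (Pr A B) A) (p1 A B))"
  have dA: "dom f = A" and cB: "cod f = B" unfolding A_def B_def by simp_all
  note a = f dA cB
  have rc1: "rst ?c1 = Id ?E" by (simp add: rst_comp_p1 rst_p1 typing)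
  have L: "?L = pair (pair ?a0 ?b1) (pair ?zA ?c1)"
  proof -
    have "?a0 \<cdot> zer A A = zer ?E A" using comp_zer[of ?a0 A A] by (simp add: typing rst_p0 Id_comp)
    thus ?thesis unfolding cross_unfold by (simp add: typing comp_Id)
  qed
  have T1: "?T1 = pair ?a0 ?c1" unfolding cross_unfold by (simp add: typing comp_Id)
  have T1N: "?T1 \<cdot> ?N = pair (pair ?a0 ?zB) (pair ?zA ?c1)"
  proof -
    have r: "rst (pair ?a0 ?c1) = Id ?E" using rc1 by (simp add: rst_pair typing rst_p0 Id_comp)
    have z1: "pair ?a0 ?c1 \<cdot> zer (Pr A B) B = ?zB"
      using comp_zer[of "pair ?a0 ?c1" "Pr A B" B] r by (simp add: typing Id_comp)
    have z2: "pair ?a0 ?c1 \<cdot> zer (Pr A B) A = ?zA"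
      using comp_zer[of "pair ?a0 ?c1" "Pr A B" A] r by (simp add: typing Id_comp)
    show ?thesis unfolding T1 using z1 z2 rc1
      by (simp add: comp_pair typing pair_comp_p0 pair_comp_p1 rst_p0 Id_comp)
  qed
  have "RD6 C f \<longleftrightarrow> ?L \<cdot> D (R f) = ?T1 \<cdot> R f"
    unfolding RD6_def Let_def dA cB using a by (simp add: D_unfold typing comp_assoc)
  moreover have "?L \<cdot> D (R f) = ?T1 \<cdot> dagger C A A (D f)"
  proof -
    have "?L \<cdot> D (R f) = pair (pair ?a0 ?zB) (pair ?zA ?c1) \<cdot> D (R f)"
      using L pair_D_R_drop_base[OF f] unfolding A_def B_def by simp
    also have "\<dots> = ?T1 \<cdot> ?N \<cdot> D (R f)" using a T1N[symmetric] by (simp add: comp_assoc typing)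
    also have "?N \<cdot> D (R f) = dagger C A A (D f)" using dagger_D[OF f] unfolding A_def B_def by simp
    finally show ?thesis .
  qed
  ultimately show ?thesis by simp
qed

lemma RD6_iff_dagger_D:
  assumes f: "arr f"
  shows "RD6 C f \<longleftrightarrow> dagger C (dom f) (dom f) (D f) = R f"
proof -
  let ?e = "cross (Id (dom f)) (p1 (cod f) (cod f))"
  have "?e \<cdot> dagger C (dom f) (dom f) (D f) = ?e \<cdot> R f \<Longrightarrow> dagger C (dom f) (dom f) (D f) = R f"
    by (rule split_epi_comp_cancel[OF cross_Id_p1_split_epi]) (use f in \<open>simp_all add: typing dagger_def\<close>)
  then show ?thesis using RD6_iff_cross_p1_dagger_D[OF f] by auto
qed

end

theorem mainTheorem9:
  assumes "is_basic_rdrc C"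
  shows "(\<forall>f. c_arr C f \<longrightarrow> RD6 C f) \<longleftrightarrow>
         (\<forall>f. c_arr C f \<longrightarrow> dagger C (c_dom C f) (c_dom C f) (Dop C f) = c_rev C f)"
proof -
  interpret basic_rdrc C by (rule basic_rdrc.intro) (rule assms)
  show ?thesis using RD6_iff_dagger_D by blast
qed

end
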